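(* Let $f:\mathbb{R}^{3}\to\mathbb{R}$ be normal. Then for all $x,y,z\in\mathbb{R}$ and $k_{1},k_{2},k_{3}\neq0$: (a) the limits $A(k_{1},y,z)=\lim_{r\to\infty}\int_{-r}^{r}f(x,y,z)e^{-ik_{1}x}dx$, $B(x,k_{2},z)=\lim_{r\to\infty}\int_{-r}^{r}f(x,y,z)e^{-ik_{2}y}dy$, $C(x,y,k_{3})=\lim_{r\to\infty}\int_{-r}^{r}f(x,y,z)e^{-ik_{3}z}dz$ all exist, and $(y,z)\mapsto A(k_{1},y,z)$, $(x,z)\mapsto B(x,k_{2},z)$, $(x,y)\mapsto C(x,y,k_{3})$ are of moderate decrease $3$ (bounded by a constant times $|(\cdot,\cdot)|^{-3}$ for $|(\cdot,\cdot)|>1$); (b) the limits $F(k_{1},k_{2},z)=\lim_{r,s\to\infty}\int_{-r}^{r}\int_{-s}^{s}f(x,y,z)e^{-ik_{1}x}e^{-ik_{2}y}dxdy$, $G(k_{1},y,k_{3})=\lim_{r,s\to\infty}\int_{-r}^{r}\int_{-s}^{s}f(x,y,z)e^{-ik_{1}x}e^{-ik_{3}z}dxdz$, $H(x,k_{2},k_{3})=\lim_{r,s\to\infty}\int_{-r}^{r}\int_{-s}^{s}f(x,y,z)e^{-ik_{2}y}e^{-ik_{3}z}dydz$ all exist, and $z\mapsto F(k_{1},k_{2},z)$, $y\mapsto G(k_{1},y,k_{3})$, $x\mapsto H(x,k_{2},k_{3})$ are of moderate decrease (bounded by a constant times the inverse square of the variable for its absolute value $>1$); (c) $F(k_{1},k_{2},z)=\int_{-\infty}^{\infty}A(k_{1},y,z)e^{-ik_{2}y}dy$,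 and the corresponding identities hold for the other functions obtained by integrating out variables in the same way, namely $F(k_{1},k_{2},z)=\int_{-\infty}^{\infty}B(x,k_{2},z)e^{-ik_{1}x}dx$, $G(k_{1},y,k_{3})=\int_{-\infty}^{\infty}A(k_{1},y,z)e^{-ik_{3}z}dz=\int_{-\infty}^{\infty}C(x,y,k_{3})e^{-ik_{1}x}dx$, $H(x,k_{2},k_{3})=\int_{-\infty}^{\infty}B(x,k_{2},z)e^{-ik_{3}z}dz=\int_{-\infty}^{\infty}C(x,y,k_{3})e^{-ik_{2}y}dy$.
   Context: One-variable: a smooth $g:\mathbb{R}\setminus V\to\mathbb{R}$, $V$ bounded closed, is analytic at infinity if there exist $\epsilon_{1},\epsilon_{2}>0$ with $g(1/t)=\sum_{n\geq1}a_{n}t^{n}$ on $(0,\epsilon_{1})$ and $g(1/t)=\sum_{n\geq1}b_{n}t^{n}$ on $(-\epsilon_{2},0)$, real coefficients, both series absolutely convergent there. A one-variable function is of moderate decrease if $|g(t)|\leq C/t^{2}$ for $|t|>1$. Two variables: for smooth $h:\mathbb{R}^{2}\setminus W\to\mathbb{R}$, $W$ closed bounded: very moderate decrease means $|h(u,v)|\leq C/|(u,v)|$ for $|(u,v)|>1$; moderate decrease $n$ means $|h|\leq C/|(u,v)|^{n}$ for $|(u,v)|>1$ (moderate decrease means $n=2$). With fibres $h_{u}(v)=h(u,v)$, $h_{v}(u)=h(u,v)$, $h$ is normal if (i) every $h_{u}$ is analytic at infinity; (ii) every $h_{v}$ is analytic at infinity; (iii) $h$ is of very moderate decrease; (iv)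 $\partial h/\partial u$, $\partial h/\partial v$ are of moderate decrease; (v) there is a uniform bound on the number of zeros of $h_{u},(h_{u})',(h_{u})'',h_{v},(h_{v})',(h_{v})''$. Three variables: smooth $f:\mathbb{R}^{3}\to\mathbb{R}$ is of very moderate decrease if $|f(x,y,z)|\leq C/|(x,y,z)|$ for $|(x,y,z)|>1$, of moderate decrease $n$ ($n\geq2$) if $|f|\leq C/|(x,y,z)|^{n}$ there. Fibres: $f_{x}(y,z)=f(x,y,z)$ etc., and $f_{x,y}(z)=f(x,y,z)$, $f_{x,z}(y)$, $f_{y,z}(x)$ similarly, with derivatives in the free variable. $f$ is normal if: (i) for every $x$, $f_{x}(y,z)$ is normal; (ii) for every $y$, $f_{y}(x,z)$ is normal; (iii) for every $z$, $f_{z}(x,y)$ is normal; (iv) $f$ is of very moderate decrease; (v) for $i+j+k\geq1$, $\frac{\partial^{i+j+k}f}{\partial x^{i}\partial y^{j}\partial z^{k}}$ is of moderate decrease $i+j+k+1$; (vi) there is a uniform bound on the number of zeros of $f_{x,y}$ and its first four derivatives, and similarly for $f_{x,z}$, $f_{y,z}$. *)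

theory Defs
  imports "HOL-Analysis.Analysis"
begin

text \<open>Analytic at infinity (for functions defined on all of R, i.e. V empty;
  coefficients a n, b n stand for the coefficients of t^(n+1), n >= 0).\<close>
definition analytic_at_infinity :: "(real \<Rightarrow> real) \<Rightarrow> bool" where
  "analytic_at_infinity g \<longleftrightarrow>
     (\<exists>\<epsilon>1>0. \<exists>\<epsilon>2>0. \<exists>a b :: nat \<Rightarrow> real.
        (\<forall>t. 0 < t \<and> t < \<epsilon>1 \<longrightarrow>
             summable (\<lambda>n. \<bar>a n * t ^ Suc n\<bar>) \<and> (\<lambda>n. a n * t ^ Suc n) sums g (1 / t)) \<and>
        (\<forall>t. - \<epsilon>2 < t \<and> t < 0 \<longrightarrow>
             summable (\<lambda>n. \<bar>b n * t ^ Suc n\<bar>) \<and> (\<lambda>n. b n * t ^ Suc n) sums g (1 / t)))"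

definition zeros_bounded_by :: "nat \<Rightarrow> (real \<Rightarrow> real) \<Rightarrow> bool" where
  "zeros_bounded_by N g \<longleftrightarrow> finite {t. g t = 0} \<and> card {t. g t = 0} \<le> N"

section \<open>Two variables (W empty); norm on real \<times> real is the Euclidean norm\<close>

definition normal2 :: "(real \<times> real \<Rightarrow> real) \<Rightarrow> bool" where
  "normal2 h \<longleftrightarrow>
     (\<forall>u. analytic_at_infinity (\<lambda>v. h (u, v))) \<and>
     (\<forall>v. analytic_at_infinity (\<lambda>u. h (u, v))) \<and>
     (\<exists>C. \<forall>p. norm p > 1 \<longrightarrow> \<bar>h p\<bar> \<le> C / norm p) \<and>
     (\<exists>C. \<forall>u v. norm (u, v) > 1 \<longrightarrow>
          \<bar>deriv (\<lambda>t. h (t, v)) u\<bar> \<le> C / (norm (u, v))\<^sup>2) \<and>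
     (\<exists>C. \<forall>u v. norm (u, v) > 1 \<longrightarrow>
          \<bar>deriv (\<lambda>t. h (u, t)) v\<bar> \<le> C / (norm (u, v))\<^sup>2) \<and>
     (\<exists>N. \<forall>u v. \<forall>m \<le> 2.
          zeros_bounded_by N ((deriv ^^ m) (\<lambda>t. h (u, t))) \<and>
          zeros_bounded_by N ((deriv ^^ m) (\<lambda>t. h (t, v))))"

datatype var3 = VX | VY | VZ

fun pd :: "var3 \<Rightarrow> (real \<times> real \<times> real \<Rightarrow> real) \<Rightarrow> (real \<times> real \<times> real \<Rightarrow> real)" where
  "pd VX g = (\<lambda>(x, y, z). deriv (\<lambda>t. g (t, y, z)) x)"
| "pd VY g = (\<lambda>(x, y, z). deriv (\<lambda>t. g (x, t, z)) y)"
| "pd VZ g = (\<lambda>(x, y, z). deriv (\<lambda>t. g (x, y, t)) z)"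

fun pdw :: "var3 list \<Rightarrow> (real \<times> real \<times> real \<Rightarrow> real) \<Rightarrow> (real \<times> real \<times> real \<Rightarrow> real)" where
  "pdw [] g = g"
| "pdw (d # w) g = pd d (pdw w g)"

definition smooth3 :: "(real \<times> real \<times> real \<Rightarrow> real) \<Rightarrow> bool" where
  "smooth3 g \<longleftrightarrow>
     (\<forall>w. continuous_on UNIV (pdw w g) \<and>
        (\<forall>x y z. (\<lambda>t. pdw w g (t, y, z)) differentiable (at x) \<and>
                 (\<lambda>t. pdw w g (x, t, z)) differentiable (at y) \<and>
                 (\<lambda>t. pdw w g (x, y, t)) differentiable (at z)))"

definition partial3 :: "nat \<Rightarrow> nat \<Rightarrow> nat \<Rightarrow> (real \<times> real \<times> real \<Rightarrow> real) \<Rightarrow> (real \<times> real \<times> real \<Rightarrow> real)" where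
  "partial3 i j k g = pdw (replicate i VX @ replicate j VY @ replicate k VZ) g"

definition normal3 :: "(real \<times> real \<times> real \<Rightarrow> real) \<Rightarrow> bool" where
  "normal3 f \<longleftrightarrow>
     smooth3 f \<and>
     (\<forall>x. normal2 (\<lambda>(y, z). f (x, y, z))) \<and>
     (\<forall>y. normal2 (\<lambda>(x, z). f (x, y, z))) \<and>
     (\<forall>z. normal2 (\<lambda>(x, y). f (x, y, z))) \<and>
     (\<exists>C. \<forall>p. norm p > 1 \<longrightarrow> \<bar>f p\<bar> \<le> C / norm p) \<and>
     (\<forall>i j k. i + j + k \<ge> 1 \<longrightarrow>
        (\<exists>C. \<forall>p. norm p > 1 \<longrightarrow> \<bar>partial3 i j k f p\<bar> \<le> C / norm p ^ (i + j + k + 1))) \<and>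
     (\<exists>N. \<forall>a b. \<forall>m \<le> 4.
          zeros_bounded_by N ((deriv ^^ m) (\<lambda>z. f (a, b, z))) \<and>
          zeros_bounded_by N ((deriv ^^ m) (\<lambda>y. f (a, y, b))) \<and>
          zeros_bounded_by N ((deriv ^^ m) (\<lambda>x. f (x, a, b))))"

definition ef :: "real \<Rightarrow> real \<Rightarrow> complex" where
  "ef k t = exp (- \<i> * complex_of_real (k * t))"

definition FA :: "(real \<times> real \<times> real \<Rightarrow> real) \<Rightarrow> real \<Rightarrow> real \<Rightarrow> real \<Rightarrow> complex" where
  "FA f k1 y z = Lim at_top (\<lambda>r. integral {-r..r} (\<lambda>x. complex_of_real (f (x, y, z)) * ef k1 x))"
definition FB :: "(real \<times> real \<times> real \<Rightarrow> real) \<Rightarrow> real \<Rightarrow> real \<Rightarrow> real \<Rightarrow> complex" where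
  "FB f x k2 z = Lim at_top (\<lambda>r. integral {-r..r} (\<lambda>y. complex_of_real (f (x, y, z)) * ef k2 y))"
definition FC :: "(real \<times> real \<times> real \<Rightarrow> real) \<Rightarrow> real \<Rightarrow> real \<Rightarrow> real \<Rightarrow> complex" where
  "FC f x y k3 = Lim at_top (\<lambda>r. integral {-r..r} (\<lambda>z. complex_of_real (f (x, y, z)) * ef k3 z))"

definition FF :: "(real \<times> real \<times> real \<Rightarrow> real) \<Rightarrow> real \<Rightarrow> real \<Rightarrow> real \<Rightarrow> complex" where
  "FF f k1 k2 z = Lim (at_top \<times>\<^sub>F at_top) (\<lambda>(r, s). integral {-r..r} (\<lambda>y.
      integral {-s..s} (\<lambda>x. complex_of_real (f (x, y, z)) * ef k1 x * ef k2 y)))"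
definition FG :: "(real \<times> real \<times> real \<Rightarrow> real) \<Rightarrow> real \<Rightarrow> real \<Rightarrow> real \<Rightarrow> complex" where
  "FG f k1 y k3 = Lim (at_top \<times>\<^sub>F at_top) (\<lambda>(r, s). integral {-r..r} (\<lambda>z.
      integral {-s..s} (\<lambda>x. complex_of_real (f (x, y, z)) * ef k1 x * ef k3 z)))"
definition FH :: "(real \<times> real \<times> real \<Rightarrow> real) \<Rightarrow> real \<Rightarrow> real \<Rightarrow> real \<Rightarrow> complex" where
  "FH f x k2 k3 = Lim (at_top \<times>\<^sub>F at_top) (\<lambda>(r, s). integral {-r..r} (\<lambda>z.
      integral {-s..s} (\<lambda>y. complex_of_real (f (x, y, z)) * ef k2 y * ef k3 z)))"

end

theory Submission
  imports Defs "HOL-Real_Asymp.Real_Asymp"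
begin

text \<open>Each one-variable transform is computed by integrating by parts three times in the
  transformed variable: the boundary terms vanish because \<open>f\<close> and its first two derivatives
  decay, and the third derivative is \<open>O(|p|^-4)\<close>, so the resulting integral converges absolutely
  and is \<open>O(|q|^-3)\<close> in the two remaining variables \<open>q\<close>. For a double transform the inner
  integral over \<open>[-s, s]\<close> is integrated by parts in the same way. The truncated inner transforms
  converge uniformly in the outer variable, and the boundary terms contribute \<open>O(1/s)\<close> uniformly
  in the outer cut-off \<open>r\<close>, so the double limit exists and equals the integral of the
  one-variable transform. Fubini on rectangles gives the same limit with the two variables
  exchanged, and the decay of the double transforms follows from the cubic decay of the
  one-variable ones.\<close>

section \<open>Integration by parts against the Fourier kernel\<close>

lemma norm_ef [simp]: "norm (ef k t) = 1"
  unfolding ef_def by (simp add: norm_exp_eq_Re)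

lemma continuous_on_ef [continuous_intros]: "continuous_on S g \<Longrightarrow> continuous_on S (\<lambda>x. ef k (g x))"
  unfolding ef_def by (intro continuous_intros)

lemma has_vector_derivative_ef:
  "(ef k has_vector_derivative (- \<i> * of_real k * ef k t)) (at t within S)"
proof -
  have "((\<lambda>z. exp (- \<i> * of_real k * z)) has_field_derivative
      exp (- \<i> * of_real k * of_real t) * (- \<i> * of_real k)) (at (of_real t))"
    by (auto intro!: derivative_eq_intros)
  from has_vector_derivative_real_field[OF this, of S] show ?thesis
    unfolding ef_def by (simp add: mult_ac)
qed

definition boundary_term :: "(real \<Rightarrow> real) \<Rightarrow> real \<Rightarrow> real \<Rightarrow> complex" where
  "boundary_term h k s = of_real (h s) * ef k s - of_real (h (- s)) * ef k (- s)"

lemma norm_boundary_term_le: "norm (boundary_term h k s) \<le> \<bar>h s\<bar> + \<bar>h (- s)\<bar>"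
  unfolding boundary_term_def by (rule order_trans[OF norm_triangle_ineq4]) (simp add: norm_mult)

lemma tendsto_boundary_term:
  assumes "(h \<longlongrightarrow> 0) at_top" "(h \<longlongrightarrow> 0) at_bot"
  shows "(boundary_term h k \<longlongrightarrow> 0) at_top"
proof (rule Lim_null_comparison)
  have "((\<lambda>s. h (- s)) \<longlongrightarrow> 0) at_top"
    by (rule filterlim_compose[OF assms(2) filterlim_uminus_at_bot_at_top])
  then show "((\<lambda>s. \<bar>h s\<bar> + \<bar>h (- s)\<bar>) \<longlongrightarrow> 0) at_top"
    using tendsto_add[OF tendsto_rabs_zero[OF assms(1)] tendsto_rabs_zero] by simp
qed (simp add: norm_boundary_term_le)

lemma integral_by_parts_ef:
  fixes h h' :: "real \<Rightarrow> real"
  assumes k: "k \<noteq> 0" and s: "0 \<le> s"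
    and h: "\<And>t. (h has_real_derivative h' t) (at t)" and h': "continuous_on UNIV h'"
  shows "integral {-s..s} (\<lambda>t. of_real (h t) * ef k t) =
    (integral {-s..s} (\<lambda>t. of_real (h' t) * ef k t) - boundary_term h k s) / (\<i> * of_real k)"
proof -
  define P where "P t = of_real (h t) * ef k t" for t
  define Q where "Q t = of_real (h' t) * ef k t" for t
  have "(P has_vector_derivative (Q t - \<i> * of_real k * P t)) (at t within {-s..s})" for t
  proof -
    have "((\<lambda>t. complex_of_real (h t)) has_vector_derivative of_real (h' t)) (at t within {-s..s})"
      using h[of t] by (metis has_field_derivative_at_within has_real_derivative_iff_has_vector_derivative
          has_vector_derivative_of_real)
    from has_vector_derivative_mult[OF this has_vector_derivative_ef] show ?thesis
      unfolding P_def Q_def by (simp add: algebra_simps)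
  qed
  then have ftc: "((\<lambda>t. Q t - \<i> * of_real k * P t) has_integral P s - P (- s)) {-s..s}"
    using s by (intro fundamental_theorem_of_calculus) auto
  have Q: "(Q has_integral integral {-s..s} Q) {-s..s}"
    unfolding Q_def by (intro integrable_integral integrable_continuous_real continuous_intros
        continuous_on_subset[OF h']) auto
  have "((\<lambda>t. (Q t - (Q t - \<i> * of_real k * P t)) / (\<i> * of_real k)) has_integral
      (integral {-s..s} Q - (P s - P (- s))) / (\<i> * of_real k)) {-s..s}"
    by (intro has_integral_divide has_integral_diff Q ftc)
  moreover have "(\<lambda>t. (Q t - (Q t - \<i> * of_real k * P t)) / (\<i> * of_real k)) = P"
    using k by (auto simp: field_simps)
  ultimately show ?thesis
    unfolding P_def Q_def boundary_term_def by (simp add: integral_unique)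
qed

lemma integral_by_parts_ef_iterated:
  fixes h :: "nat \<Rightarrow> real \<Rightarrow> real"
  assumes k: "k \<noteq> 0" and s: "0 \<le> s"
    and h: "\<And>j t. j < n \<Longrightarrow> (h j has_real_derivative h (Suc j) t) (at t)"
    and hn: "continuous_on UNIV (h n)"
  shows "integral {-s..s} (\<lambda>t. of_real (h 0 t) * ef k t) =
    integral {-s..s} (\<lambda>t. of_real (h n t) * ef k t) / (\<i> * of_real k) ^ n
      - (\<Sum>j<n. boundary_term (h j) k s / (\<i> * of_real k) ^ Suc j)"
  using h hn
proof (induction n)
  case (Suc n)
  have "continuous_on UNIV (h n)"
    using Suc.prems(1)[of n] by (metis DERIV_isCont continuous_at_imp_continuous_on lessI)
  with Suc have IH: "integral {-s..s} (\<lambda>t. of_real (h 0 t) * ef k t) =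
    integral {-s..s} (\<lambda>t. of_real (h n t) * ef k t) / (\<i> * of_real k) ^ n
      - (\<Sum>j<n. boundary_term (h j) k s / (\<i> * of_real k) ^ Suc j)"
    by simp
  have "integral {-s..s} (\<lambda>t. of_real (h n t) * ef k t) =
      (integral {-s..s} (\<lambda>t. of_real (h (Suc n) t) * ef k t) - boundary_term (h n) k s) / (\<i> * of_real k)"
    using Suc.prems by (intro integral_by_parts_ef[OF k s]) auto
  then show ?case
    unfolding IH by (simp add: diff_divide_distrib)
qed simp

lemma one_add_sq_neq_zero [simp]: "(1::real) + x\<^sup>2 \<noteq> 0"
  using add_pos_nonneg[of 1 "x\<^sup>2"] by simp

lemma has_integral_inverse_sq_add_sq:
  fixes \<rho> :: real
  assumes "0 < \<rho>" "a \<le> b"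
  shows "((\<lambda>x. 1 / (x\<^sup>2 + \<rho>\<^sup>2)) has_integral (arctan (b / \<rho>) - arctan (a / \<rho>)) / \<rho>) {a..b}"
proof -
  have "((\<lambda>x. arctan (x / \<rho>) / \<rho>) has_real_derivative 1 / (x\<^sup>2 + \<rho>\<^sup>2)) (at x within {a..b})" for x
  proof -
    have "((\<lambda>x. arctan (x / \<rho>) / \<rho>) has_real_derivative inverse (1 + (x / \<rho>)\<^sup>2) * (1 / \<rho>) / \<rho>)
        (at x within {a..b})"
      using assms(1) by (auto intro!: derivative_eq_intros)
    moreover have "1 + (x / \<rho>)\<^sup>2 = (x\<^sup>2 + \<rho>\<^sup>2) / \<rho>\<^sup>2"
      using assms(1) by (simp add: field_simps power_divide)
    then have "inverse (1 + (x / \<rho>)\<^sup>2) * (1 / \<rho>) / \<rho> = 1 / (x\<^sup>2 + \<rho>\<^sup>2)"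
      using assms(1) by (simp add: power2_eq_square)
    ultimately show ?thesis by simp
  qed
  from fundamental_theorem_of_calculus[OF assms(2) this[unfolded has_real_derivative_iff_has_vector_derivative]]
  show ?thesis by (simp add: diff_divide_distrib)
qed

lemma has_integral_inverse_one_add_sq:
  "a \<le> b \<Longrightarrow> ((\<lambda>x. 1 / (1 + x\<^sup>2)) has_integral arctan b - arctan a) {a..b}"
  using has_integral_inverse_sq_add_sq[of 1 a b] by (simp add: add.commute)

lemma ball_subset_atLeastAtMost_iff:
  fixes a b B :: real
  assumes "0 < B"
  shows "ball 0 B \<subseteq> {a..b} \<longleftrightarrow> a \<le> - B \<and> B \<le> b"
proof
  assume "ball 0 B \<subseteq> {a..b}"
  then have "closure (ball 0 B) \<subseteq> {a..b}"
    by (intro closure_minimal) auto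
  then have "cball 0 B \<subseteq> {a..b}"
    using assms by simp
  moreover have "- B \<in> cball 0 B" "B \<in> cball 0 B"
    using assms by (auto simp: dist_real_def)
  ultimately have "- B \<in> {a..b}" "B \<in> {a..b}"
    by blast+
  then show "a \<le> - B \<and> B \<le> b" by auto
qed (auto simp: dist_real_def)

lemma has_integral_inverse_one_add_sq_UNIV: "((\<lambda>x::real. 1 / (1 + x\<^sup>2)) has_integral pi) UNIV"
proof (subst has_integral_alt', intro conjI allI impI)
  fix a b :: real
  show "(\<lambda>x. if x \<in> UNIV then 1 / (1 + x\<^sup>2) else 0) integrable_on cbox a b"
    by (auto intro!: integrable_continuous_real continuous_intros)
next
  fix e :: real assume "e > 0"
  then have "\<forall>\<^sub>F x in at_top. arctan x > pi / 2 - e / 2"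
    using tendsto_arctan_at_top by (intro order_tendstoD) auto
  then obtain B where B: "\<And>x. x \<ge> B \<Longrightarrow> arctan x > pi / 2 - e / 2"
    by (auto simp: eventually_at_top_linorder)
  show "\<exists>B>0. \<forall>a b. ball 0 B \<subseteq> cbox a b \<longrightarrow>
      norm (integral (cbox a b) (\<lambda>x. if x \<in> UNIV then 1 / (1 + x\<^sup>2) else 0) - pi) < e"
  proof (intro exI[of _ "max B 1"] conjI allI impI)
    fix a b :: real assume "ball 0 (max B 1) \<subseteq> cbox a b"
    then have ab: "a \<le> - max B 1" "max B 1 \<le> b"
      using ball_subset_atLeastAtMost_iff[of "max B 1" a b] by auto
    then have "integral (cbox a b) (\<lambda>x. if x \<in> UNIV then 1 / (1 + x\<^sup>2) else 0) = arctan b - arctan a"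
      by (auto intro!: integral_unique has_integral_inverse_one_add_sq)
    moreover have "arctan b > pi / 2 - e / 2" "arctan (- a) > pi / 2 - e / 2"
      using B ab by auto
    moreover have "arctan b < pi / 2" "arctan (- a) < pi / 2"
      using arctan_bounded by auto
    ultimately show "norm (integral (cbox a b) (\<lambda>x. if x \<in> UNIV then 1 / (1 + x\<^sup>2) else 0) - pi) < e"
      by (auto simp: arctan_minus)
  qed simp
qed

lemma tendsto_integral_symmetric:
  fixes g :: "real \<Rightarrow> 'a::banach"
  assumes "g integrable_on UNIV"
  shows "((\<lambda>r. integral {-r..r} g) \<longlongrightarrow> integral UNIV g) at_top"
proof (rule tendstoI)
  fix e :: real assume "e > 0"
  have "(g has_integral integral UNIV g) UNIV"
    using assms by auto
  then have "\<forall>e>0. \<exists>B>0. \<forall>a b. ball 0 B \<subseteq> cbox a b \<longrightarrow>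
      norm (integral (cbox a b) (\<lambda>x. if x \<in> UNIV then g x else 0) - integral UNIV g) < e"
    by (subst (asm) has_integral_alt') blast
  with \<open>e > 0\<close> obtain B where B: "B > 0" "\<And>a b. ball 0 B \<subseteq> cbox a b \<Longrightarrow>
      norm (integral (cbox a b) g - integral UNIV g) < e"
    by auto
  show "\<forall>\<^sub>F r in at_top. dist (integral {-r..r} g) (integral UNIV g) < e"
    unfolding eventually_at_top_linorder
  proof (intro exI[of _ B] allI impI)
    fix r assume "r \<ge> B"
    with B show "dist (integral {-r..r} g) (integral UNIV g) < e"
      using ball_subset_atLeastAtMost_iff[of B "- r" r] by (simp add: dist_norm)
  qed
qed

lemma integrable_on_UNIV_inverse_sq_bound:
  fixes g :: "real \<Rightarrow> 'a::euclidean_space"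
  assumes "continuous_on UNIV g" "\<And>x. norm (g x) \<le> B / (1 + x\<^sup>2)"
  shows "g integrable_on UNIV"
proof (rule measurable_bounded_by_integrable_imp_integrable)
  show "g \<in> borel_measurable (lebesgue_on UNIV)"
    using assms(1) by (intro continuous_imp_measurable_on_sets_lebesgue) auto
  show "(\<lambda>x. B / (1 + x\<^sup>2)) integrable_on UNIV"
    using has_integral_mult_right[OF has_integral_inverse_one_add_sq_UNIV, of B] by auto
qed (use assms in simp_all)

lemma norm_integral_le_arctan:
  fixes g :: "real \<Rightarrow> 'a::euclidean_space"
  assumes "g integrable_on {a..b}" "a \<le> b" "\<And>x. norm (g x) \<le> B / (1 + x\<^sup>2)"
  shows "norm (integral {a..b} g) \<le> B * (arctan b - arctan a)"
proof -
  have B: "((\<lambda>x. B * (1 / (1 + x\<^sup>2))) has_integral B * (arctan b - arctan a)) {a..b}"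
    by (intro has_integral_mult_right has_integral_inverse_one_add_sq assms)
  then have "norm (integral {a..b} g) \<le> integral {a..b} (\<lambda>x. B * (1 / (1 + x\<^sup>2)))"
    using assms by (intro integral_norm_bound_integral) auto
  with B show ?thesis by (simp add: integral_unique)
qed

lemma norm_integral_tail_le:
  fixes g :: "real \<Rightarrow> 'a::euclidean_space"
  assumes g: "g integrable_on UNIV" and gB: "\<And>x. norm (g x) \<le> B / (1 + x\<^sup>2)" and r: "0 \<le> r"
  shows "norm (integral UNIV g - integral {-r..r} g) \<le> B * (pi - 2 * arctan r)"
proof (rule tendsto_upperbound)
  show "((\<lambda>R. norm (integral {-R..R} g - integral {-r..r} g)) \<longlongrightarrow>
      norm (integral UNIV g - integral {-r..r} g)) at_top"
    by (intro tendsto_intros tendsto_integral_symmetric g)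
  have B: "B \<ge> 0"
    using order_trans[OF norm_ge_zero gB[of 0]] by simp
  have sub: "g integrable_on {a..b}" for a b
    using g integrable_on_subinterval subset_UNIV by blast
  have "norm (integral {-R..R} g - integral {-r..r} g) \<le> B * (pi - 2 * arctan r)" if R: "r \<le> R" for R
  proof -
    have "integral {-R..R} g = integral {-R..-r} g + integral {-r..R} g"
      "integral {-r..R} g = integral {-r..r} g + integral {r..R} g"
      using R r by (intro Henstock_Kurzweil_Integration.integral_combine[symmetric, OF _ _ sub]; simp)+
    then have "integral {-R..R} g - integral {-r..r} g = integral {-R..-r} g + integral {r..R} g"
      by simp
    also have "norm \<dots> \<le> B * (arctan (- r) - arctan (- R)) + B * (arctan R - arctan r)"
      using R by (intro norm_triangle_le add_mono norm_integral_le_arctan sub gB) auto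
    also have "\<dots> = B * (2 * arctan R - 2 * arctan r)"
      by (simp add: arctan_minus algebra_simps)
    also have "\<dots> \<le> B * (pi - 2 * arctan r)"
      using B arctan_bounded[of R] by (intro mult_left_mono) auto
    finally show ?thesis .
  qed
  then show "\<forall>\<^sub>F R in at_top. norm (integral {-R..R} g - integral {-r..r} g) \<le> B * (pi - 2 * arctan r)"
    unfolding eventually_at_top_linorder by blast
qed simp

lemma tendsto_pi_minus_arctan: "((\<lambda>r. pi - 2 * arctan r) \<longlongrightarrow> 0) at_top"
  using tendsto_diff[OF tendsto_const tendsto_mult[OF tendsto_const tendsto_arctan_at_top], of pi 2]
  by simp

lemma norm_integral_symmetric_le_pi_div:
  fixes g :: "real \<Rightarrow> complex"
  assumes g: "g integrable_on {-r..r}" and r: "0 \<le> r" and A: "0 \<le> A" and \<rho>: "0 < \<rho>"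
    and gA: "\<And>t. norm (g t) \<le> A / (t\<^sup>2 + \<rho>\<^sup>2)"
  shows "norm (integral {-r..r} g) \<le> A * pi / \<rho>"
proof -
  have A': "((\<lambda>t. A * (1 / (t\<^sup>2 + \<rho>\<^sup>2))) has_integral A * ((arctan (r / \<rho>) - arctan (- r / \<rho>)) / \<rho>)) {-r..r}"
    using r \<rho> by (intro has_integral_mult_right has_integral_inverse_sq_add_sq) auto
  then have "norm (integral {-r..r} g) \<le> integral {-r..r} (\<lambda>t. A * (1 / (t\<^sup>2 + \<rho>\<^sup>2)))"
    using gA by (intro integral_norm_bound_integral g) auto
  also have "\<dots> = A * ((arctan (r / \<rho>) - arctan (- r / \<rho>)) / \<rho>)"
    using A' by (rule integral_unique)
  also have "\<dots> = A * (2 * arctan (r / \<rho>)) / \<rho>"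
    by (simp add: arctan_minus)
  also have "\<dots> \<le> A * pi / \<rho>"
    using \<rho> A arctan_bounded[of "r / \<rho>"] by (intro divide_right_mono mult_left_mono) auto
  finally show ?thesis .
qed

lemma norm_integral_UNIV_le_pi_div:
  fixes g :: "real \<Rightarrow> complex"
  assumes g: "g integrable_on UNIV" and A: "0 \<le> A" and \<rho>: "0 < \<rho>"
    and gA: "\<And>t. norm (g t) \<le> A / (t\<^sup>2 + \<rho>\<^sup>2)"
  shows "norm (integral UNIV g) \<le> A * pi / \<rho>"
proof (rule tendsto_upperbound)
  show "((\<lambda>r. norm (integral {-r..r} g)) \<longlongrightarrow> norm (integral UNIV g)) at_top"
    by (intro tendsto_norm tendsto_integral_symmetric g)
  show "\<forall>\<^sub>F r in at_top. norm (integral {-r..r} g) \<le> A * pi / \<rho>"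
    using eventually_ge_at_top[of 0]
    by eventually_elim
      (intro norm_integral_symmetric_le_pi_div[OF _ _ A \<rho> gA] integrable_on_subinterval[OF g], auto)
qed simp

lemma tendsto_integral_by_parts_ef:
  fixes h :: "nat \<Rightarrow> real \<Rightarrow> real"
  assumes k: "k \<noteq> 0"
    and h: "\<And>j t. j < n \<Longrightarrow> (h j has_real_derivative h (Suc j) t) (at t)"
    and hn: "continuous_on UNIV (h n)"
    and lim_top: "\<And>j. j < n \<Longrightarrow> (h j \<longlongrightarrow> 0) at_top"
    and lim_bot: "\<And>j. j < n \<Longrightarrow> (h j \<longlongrightarrow> 0) at_bot"
    and hB: "\<And>t. \<bar>h n t\<bar> \<le> B / (1 + t\<^sup>2)"
  shows "(\<lambda>t. of_real (h n t) * ef k t) integrable_on UNIV"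
    and "((\<lambda>r. integral {-r..r} (\<lambda>t. of_real (h 0 t) * ef k t)) \<longlongrightarrow>
      integral UNIV (\<lambda>t. of_real (h n t) * ef k t) / (\<i> * of_real k) ^ n) at_top"
proof -
  show int: "(\<lambda>t. of_real (h n t) * ef k t) integrable_on UNIV"
    using hB by (intro integrable_on_UNIV_inverse_sq_bound[where B=B] continuous_intros hn)
      (simp add: norm_mult)
  have "((\<lambda>r. integral {-r..r} (\<lambda>t. of_real (h n t) * ef k t) / (\<i> * of_real k) ^ n
      - (\<Sum>j<n. boundary_term (h j) k r / (\<i> * of_real k) ^ Suc j)) \<longlongrightarrow>
      integral UNIV (\<lambda>t. of_real (h n t) * ef k t) / (\<i> * of_real k) ^ n - (\<Sum>j<n. 0 / (\<i> * of_real k) ^ Suc j)) at_top"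
    using k by (intro tendsto_intros tendsto_integral_symmetric int tendsto_boundary_term lim_top lim_bot) auto
  moreover have "\<forall>\<^sub>F r in at_top. integral {-r..r} (\<lambda>t. of_real (h 0 t) * ef k t) =
      integral {-r..r} (\<lambda>t. of_real (h n t) * ef k t) / (\<i> * of_real k) ^ n
      - (\<Sum>j<n. boundary_term (h j) k r / (\<i> * of_real k) ^ Suc j)"
    using eventually_ge_at_top[of 0]
    by eventually_elim (rule integral_by_parts_ef_iterated[OF k _ h hn])
  ultimately show "((\<lambda>r. integral {-r..r} (\<lambda>t. of_real (h 0 t) * ef k t)) \<longlongrightarrow>
      integral UNIV (\<lambda>t. of_real (h n t) * ef k t) / (\<i> * of_real k) ^ n) at_top"
    by (simp add: tendsto_cong)
qed

lemma tendsto_at_top_prod_at_top_of_bound: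
  fixes F :: "real \<times> real \<Rightarrow> 'a::real_normed_vector"
  assumes a: "(a \<longlongrightarrow> 0) at_top" and b: "(b \<longlongrightarrow> 0) at_top"
    and F: "\<And>r s. R \<le> r \<Longrightarrow> S \<le> s \<Longrightarrow> norm (F (r, s) - L) \<le> a r + b s"
  shows "(F \<longlongrightarrow> L) (at_top \<times>\<^sub>F at_top)"
proof -
  have "((\<lambda>p. a (fst p) + b (snd p)) \<longlongrightarrow> 0 + 0) (at_top \<times>\<^sub>F at_top)"
    by (intro tendsto_add filterlim_compose[OF a filterlim_fst] filterlim_compose[OF b filterlim_snd])
  then have lim: "((\<lambda>p. a (fst p) + b (snd p)) \<longlongrightarrow> 0) (at_top \<times>\<^sub>F at_top)"
    by simp
  have "\<forall>\<^sub>F p in at_top \<times>\<^sub>F at_top. norm (F p - L) \<le> a (fst p) + b (snd p)"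
    unfolding eventually_prod_filter
  proof (intro exI conjI)
    show "eventually (\<lambda>r. R \<le> r) at_top" "eventually (\<lambda>s. S \<le> s) at_top"
      by (rule eventually_ge_at_top)+
    show "\<forall>r s. R \<le> r \<longrightarrow> S \<le> s \<longrightarrow> norm (F (r, s) - L) \<le> a (fst (r, s)) + b (snd (r, s))"
      using F by simp
  qed
  from Lim_null_comparison[OF this lim] show ?thesis
    by (rule LIM_zero_cancel)
qed

lemma continuous_on_curried:
  assumes "continuous_on UNIV (case_prod f)" "continuous_on S g" "continuous_on S g'"
  shows "continuous_on S (\<lambda>t. f (g t) (g' t))"
  using continuous_on_compose2[OF assms(1) continuous_on_Pair[OF assms(2,3)]] by simp

lemma continuous_on_integral_parameter:
  fixes F :: "real \<Rightarrow> real \<Rightarrow> 'a::banach"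
  assumes "continuous_on UNIV (case_prod F)"
  shows "continuous_on UNIV (\<lambda>y. integral {a..b} (\<lambda>x. F x y))"
proof -
  have "continuous_on UNIV (\<lambda>(y, x). F x y)"
    using continuous_on_curried[OF assms continuous_on_snd[OF continuous_on_id] continuous_on_fst[OF continuous_on_id]]
    by (simp add: split_def)
  then have "continuous_on (UNIV \<times> cbox a b) (\<lambda>(y, x). F x y)"
    by (rule continuous_on_subset) simp
  from integral_continuous_on_param[OF this] show ?thesis by simp
qed

lemma tendsto_iterated_integral_swap:
  fixes F :: "real \<Rightarrow> real \<Rightarrow> 'a::banach"
  assumes F: "continuous_on UNIV (case_prod F)"
    and L: "((\<lambda>(r, s). integral {-r..r} (\<lambda>x. integral {-s..s} (\<lambda>y. F x y))) \<longlongrightarrow> L) (at_top \<times>\<^sub>F at_top)"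
  shows "((\<lambda>(r, s). integral {-r..r} (\<lambda>y. integral {-s..s} (\<lambda>x. F x y))) \<longlongrightarrow> L) (at_top \<times>\<^sub>F at_top)"
proof -
  have swap: "integral {-s..s} (\<lambda>x. integral {-r..r} (\<lambda>y. F x y)) =
      integral {-r..r} (\<lambda>y. integral {-s..s} (\<lambda>x. F x y))" for r s
    using integral_swap_continuous[where a="-s" and b=s and c="-r" and d=r, OF continuous_on_subset[OF F subset_UNIV]]
    by (simp add: box_real)
  have eq: "(\<lambda>(r, s). integral {-r..r} (\<lambda>y. integral {-s..s} (\<lambda>x. F x y))) =
      (\<lambda>(r, s). integral {-r..r} (\<lambda>x. integral {-s..s} (\<lambda>y. F x y))) \<circ> prod.swap"
  proof (rule ext, clarify)
    fix r s :: real
    show "integral {-r..r} (\<lambda>y. integral {-s..s} (\<lambda>x. F x y)) =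
        ((\<lambda>(r, s). integral {-r..r} (\<lambda>x. integral {-s..s} (\<lambda>y. F x y))) \<circ> prod.swap) (r, s)"
      unfolding comp_apply prod.swap_def fst_conv snd_conv prod.case by (rule swap[symmetric])
  qed
  have "filterlim (\<lambda>(r, s). integral {-r..r} (\<lambda>x. integral {-s..s} (\<lambda>y. F x y))) (nhds L)
      (filtermap prod.swap (at_top \<times>\<^sub>F at_top))"
    using L by (simp only: prod_filter_commute[of at_top at_top, symmetric])
  then show ?thesis
    unfolding eq comp_def by (simp only: filterlim_filtermap)
qed

section \<open>Iterated integration by parts in two variables\<close>

locale double_integral_by_parts =
  fixes h :: "nat \<Rightarrow> real \<Rightarrow> real \<Rightarrow> real" and hy :: "real \<Rightarrow> real \<Rightarrow> real"
    and n :: nat and k1 k2 A :: real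
  assumes k1: "k1 \<noteq> 0" and k2: "k2 \<noteq> 0"
    and h_deriv: "\<And>j x y. j < n \<Longrightarrow> ((\<lambda>t. h j t y) has_real_derivative h (Suc j) x y) (at x)"
    and hy_deriv: "\<And>x y. ((\<lambda>t. h 0 x t) has_real_derivative hy x y) (at y)"
    and h_cont: "\<And>j. j \<le> n \<Longrightarrow> continuous_on UNIV (case_prod (h j))"
    and hy_cont: "continuous_on UNIV (case_prod hy)"
    and A: "0 \<le> A"
    and h0_bound: "\<And>x y. 1 \<le> \<bar>x\<bar> \<Longrightarrow> \<bar>h 0 x y\<bar> \<le> A / \<bar>x\<bar>"
    and h_bound: "\<And>j x y. 0 < j \<Longrightarrow> j < n \<Longrightarrow> \<bar>h j x y\<bar> \<le> A / (1 + x\<^sup>2 + y\<^sup>2)"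
    and hy_bound: "\<And>x y. \<bar>hy x y\<bar> \<le> A / (1 + x\<^sup>2 + y\<^sup>2)"
    and hn_bound: "\<And>x y. \<bar>h n x y\<bar> \<le> A / ((1 + x\<^sup>2) * (1 + y\<^sup>2))"
begin

abbreviation partial_transform :: "real \<Rightarrow> real \<Rightarrow> complex" where
  "partial_transform s y \<equiv> integral {-s..s} (\<lambda>x. of_real (h n x y) * ef k1 x)"

abbreviation transform :: "real \<Rightarrow> complex" where
  "transform y \<equiv> integral UNIV (\<lambda>x. of_real (h n x y) * ef k1 x)"

lemma norm_hn_ef_le: "norm (of_real (h n x y) * ef k1 x) \<le> A / (1 + y\<^sup>2) / (1 + x\<^sup>2)"
  using hn_bound[of x y] by (simp add: norm_mult mult.commute)

lemma integrable_hn_ef: "(\<lambda>x. of_real (h n x y) * ef k1 x) integrable_on UNIV"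
  by (intro integrable_on_UNIV_inverse_sq_bound[OF _ norm_hn_ef_le] continuous_intros
      continuous_on_curried[OF h_cont] continuous_on_const continuous_on_id) simp

lemma norm_transform_minus_partial_le:
  "0 \<le> s \<Longrightarrow> norm (transform y - partial_transform s y) \<le> A / (1 + y\<^sup>2) * (pi - 2 * arctan s)"
  by (rule norm_integral_tail_le[OF integrable_hn_ef norm_hn_ef_le])

lemma continuous_on_partial_transform: "continuous_on UNIV (partial_transform s)"
  by (intro continuous_on_integral_parameter, unfold split_def)
    (intro continuous_intros continuous_on_curried[OF h_cont] continuous_on_fst continuous_on_snd
      continuous_on_id order_refl)

lemma continuous_on_transform: "continuous_on UNIV transform"
proof (rule uniform_limit_theorem[where F = at_top])
  show "\<forall>\<^sub>F s in at_top. continuous_on UNIV (partial_transform s)"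
    by (simp add: continuous_on_partial_transform)
  show "uniform_limit UNIV partial_transform transform at_top"
  proof (rule uniform_limitI)
    fix e :: real assume "0 < e"
    have "((\<lambda>s. A * (pi - 2 * arctan s)) \<longlongrightarrow> A * 0) at_top"
      by (intro tendsto_mult tendsto_const tendsto_pi_minus_arctan)
    with \<open>0 < e\<close> have "\<forall>\<^sub>F s in at_top. A * (pi - 2 * arctan s) < e"
      by (auto dest: order_tendstoD)
    then show "\<forall>\<^sub>F s in at_top. \<forall>y\<in>UNIV. dist (partial_transform s y) (transform y) < e"
      using eventually_ge_at_top[of 0]
    proof eventually_elim
      case (elim s)
      show ?case
      proof
        fix y
        have "A / (1 + y\<^sup>2) \<le> A / 1"
          using A by (intro divide_left_mono) (auto simp: add_pos_nonneg)
        then have "A / (1 + y\<^sup>2) * (pi - 2 * arctan s) \<le> A * (pi - 2 * arctan s)"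
          using arctan_bounded[of s] by (intro mult_right_mono) auto
        then show "dist (partial_transform s y) (transform y) < e"
          using elim norm_transform_minus_partial_le[of s y] by (simp add: dist_norm norm_minus_commute)
      qed
    qed
  qed
qed simp

lemma norm_transform_le: "norm (transform y) \<le> A * pi / (1 + y\<^sup>2)"
  using norm_transform_minus_partial_le[of 0 y] by simp

lemma integrable_transform_ef:
  "(\<lambda>y. transform y / (\<i> * of_real k1) ^ n * ef k2 y) integrable_on UNIV"
proof (rule integrable_on_UNIV_inverse_sq_bound)
  show "continuous_on UNIV (\<lambda>y. transform y / (\<i> * of_real k1) ^ n * ef k2 y)"
    using k1 by (intro continuous_intros continuous_on_transform) auto
  show "norm (transform y / (\<i> * of_real k1) ^ n * ef k2 y) \<le> A * pi / \<bar>k1\<bar> ^ n / (1 + y\<^sup>2)" for y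
  proof -
    have "norm (transform y / (\<i> * of_real k1) ^ n * ef k2 y) = norm (transform y) / \<bar>k1\<bar> ^ n"
      by (simp add: norm_mult norm_divide norm_power)
    also have "\<dots> \<le> A * pi / (1 + y\<^sup>2) / \<bar>k1\<bar> ^ n"
      by (intro divide_right_mono norm_transform_le) simp
    finally show ?thesis
      by (simp add: divide_divide_eq_left mult.commute)
  qed
qed

lemma norm_integral_h0_ef_le:
  assumes x: "1 \<le> \<bar>x\<bar>" and r: "0 \<le> r"
  shows "norm (integral {-r..r} (\<lambda>y. of_real (h 0 x y) * ef k2 y)) \<le> (A * pi + 2 * A) / (\<bar>x\<bar> * \<bar>k2\<bar>)"
proof -
  have hy_x: "continuous_on UNIV (hy x)"
    using continuous_on_curried[OF hy_cont continuous_on_const continuous_on_id] by simp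
  have "norm (integral {-r..r} (\<lambda>y. of_real (hy x y) * ef k2 y)) \<le> A * pi / \<bar>x\<bar>"
  proof (rule norm_integral_symmetric_le_pi_div[OF _ r A])
    show "(\<lambda>y. of_real (hy x y) * ef k2 y) integrable_on {-r..r}"
      by (intro integrable_continuous_real continuous_intros continuous_on_subset[OF hy_x]) auto
    show "norm (of_real (hy x y) * ef k2 y) \<le> A / (y\<^sup>2 + \<bar>x\<bar>\<^sup>2)" for y
    proof -
      have "0 < y\<^sup>2 + \<bar>x\<bar>\<^sup>2"
        using x by (intro add_nonneg_pos) auto
      then have "A / (1 + x\<^sup>2 + y\<^sup>2) \<le> A / (y\<^sup>2 + \<bar>x\<bar>\<^sup>2)"
        using A by (intro divide_left_mono) auto
      then show ?thesis
        using hy_bound[of x y] by (simp add: norm_mult)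
    qed
  qed (use x in auto)
  moreover have "norm (boundary_term (h 0 x) k2 r) \<le> 2 * A / \<bar>x\<bar>"
    using norm_boundary_term_le[of "h 0 x" k2 r] h0_bound[OF x, of r] h0_bound[OF x, of "- r"] by simp
  ultimately have "norm (integral {-r..r} (\<lambda>y. of_real (hy x y) * ef k2 y) - boundary_term (h 0 x) k2 r)
      \<le> A * pi / \<bar>x\<bar> + 2 * A / \<bar>x\<bar>"
    by (meson add_mono norm_triangle_ineq4 order_trans)
  moreover have "integral {-r..r} (\<lambda>y. of_real (h 0 x y) * ef k2 y) =
      (integral {-r..r} (\<lambda>y. of_real (hy x y) * ef k2 y) - boundary_term (h 0 x) k2 r) / (\<i> * of_real k2)"
    by (rule integral_by_parts_ef[OF k2 r hy_deriv hy_x])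
  ultimately have "norm (integral {-r..r} (\<lambda>y. of_real (h 0 x y) * ef k2 y)) \<le> (A * pi / \<bar>x\<bar> + 2 * A / \<bar>x\<bar>) / \<bar>k2\<bar>"
    by (simp add: norm_divide norm_mult divide_right_mono)
  then show ?thesis
    by (simp add: add_divide_distrib divide_divide_eq_left)
qed

text \<open>The boundary term of \<open>h 0\<close> decays only like \<open>1 / s\<close> pointwise, so its integral over
  \<open>y\<close> is estimated after one more integration by parts, now in \<open>y\<close>.\<close>

lemma norm_integral_boundary_term_h0_ef_le:
  assumes s: "1 \<le> s" and r: "0 \<le> r"
  shows "norm (integral {-r..r} (\<lambda>y. boundary_term (\<lambda>x. h 0 x y) k1 s * ef k2 y))
    \<le> 2 * (A * pi + 2 * A) / \<bar>k2\<bar> / s"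
proof -
  have int: "(\<lambda>y. of_real (h 0 x y) * ef k2 y) integrable_on {-r..r}" for x
    by (intro integrable_continuous_real continuous_intros continuous_on_curried[OF h_cont]) auto
  have "integral {-r..r} (\<lambda>y. boundary_term (\<lambda>x. h 0 x y) k1 s * ef k2 y) =
      integral {-r..r} (\<lambda>y. ef k1 s * (of_real (h 0 s y) * ef k2 y) - ef k1 (- s) * (of_real (h 0 (- s) y) * ef k2 y))"
    unfolding boundary_term_def by (simp add: algebra_simps)
  also have "\<dots> = ef k1 s * integral {-r..r} (\<lambda>y. of_real (h 0 s y) * ef k2 y)
      - ef k1 (- s) * integral {-r..r} (\<lambda>y. of_real (h 0 (- s) y) * ef k2 y)"
    by (simp add: integral_diff integrable_on_mult_right int)
  finally have "norm (integral {-r..r} (\<lambda>y. boundary_term (\<lambda>x. h 0 x y) k1 s * ef k2 y)) \<le>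
      norm (integral {-r..r} (\<lambda>y. of_real (h 0 s y) * ef k2 y))
      + norm (integral {-r..r} (\<lambda>y. of_real (h 0 (- s) y) * ef k2 y))"
    by (simp add: order_trans[OF norm_triangle_ineq4] norm_mult)
  also have "\<dots> \<le> (A * pi + 2 * A) / (s * \<bar>k2\<bar>) + (A * pi + 2 * A) / (s * \<bar>k2\<bar>)"
    using norm_integral_h0_ef_le[of s r] norm_integral_h0_ef_le[of "- s" r] s r by (intro add_mono) simp_all
  also have "\<dots> = 2 * (A * pi + 2 * A) / \<bar>k2\<bar> / s"
    by (simp add: divide_divide_eq_left mult.commute)
  finally show ?thesis .
qed

lemma norm_integral_boundary_term_ef_le:
  assumes j: "j < n" and s: "1 \<le> s" and r: "0 \<le> r"
  shows "norm (integral {-r..r} (\<lambda>y. boundary_term (\<lambda>x. h j x y) k1 s * ef k2 y))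
    \<le> (2 * (A * pi + 2 * A) / \<bar>k2\<bar> + 2 * A * pi) / s"
proof (cases "j = 0")
  case True
  have "2 * (A * pi + 2 * A) / \<bar>k2\<bar> / s \<le> (2 * (A * pi + 2 * A) / \<bar>k2\<bar> + 2 * A * pi) / s"
    using A s by (intro divide_right_mono) auto
  with norm_integral_boundary_term_h0_ef_le[OF s r] True show ?thesis
    by simp
next
  case False
  have "norm (integral {-r..r} (\<lambda>y. boundary_term (\<lambda>x. h j x y) k1 s * ef k2 y)) \<le> 2 * A * pi / s"
  proof (rule norm_integral_symmetric_le_pi_div[OF _ r])
    show "(\<lambda>y. boundary_term (\<lambda>x. h j x y) k1 s * ef k2 y) integrable_on {-r..r}"
      unfolding boundary_term_def using j
      by (intro integrable_continuous_real continuous_intros continuous_on_curried[OF h_cont]) auto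
    show "norm (boundary_term (\<lambda>x. h j x y) k1 s * ef k2 y) \<le> 2 * A / (y\<^sup>2 + s\<^sup>2)" for y
    proof -
      have "0 < y\<^sup>2 + s\<^sup>2"
        using s by (intro add_nonneg_pos) auto
      then have "A / (1 + s\<^sup>2 + y\<^sup>2) \<le> A / (y\<^sup>2 + s\<^sup>2)"
        using A by (intro divide_left_mono) auto
      moreover have "\<bar>h j s y\<bar> \<le> A / (1 + s\<^sup>2 + y\<^sup>2)" "\<bar>h j (- s) y\<bar> \<le> A / (1 + s\<^sup>2 + y\<^sup>2)"
        using h_bound[of j s y] h_bound[of j "- s" y] False j by simp_all
      ultimately have "\<bar>h j s y\<bar> + \<bar>h j (- s) y\<bar> \<le> 2 * A / (y\<^sup>2 + s\<^sup>2)"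
        by simp
      then show ?thesis
        using norm_boundary_term_le[of "\<lambda>x. h j x y" k1 s] by (simp add: norm_mult)
    qed
  qed (use A s in auto)
  also have "\<dots> \<le> (2 * (A * pi + 2 * A) / \<bar>k2\<bar> + 2 * A * pi) / s"
    using A s by (intro divide_right_mono) auto
  finally show ?thesis .
qed

lemma norm_integral_partial_transform_minus_transform_le:
  assumes r: "0 \<le> r" and s: "0 \<le> s"
  shows "norm (integral {-r..r} (\<lambda>y. partial_transform s y / (\<i> * of_real k1) ^ n * ef k2 y)
      - integral {-r..r} (\<lambda>y. transform y / (\<i> * of_real k1) ^ n * ef k2 y))
    \<le> A * (pi - 2 * arctan s) / \<bar>k1\<bar> ^ n * pi"
proof -
  define c where "c = (\<i> * of_real k1) ^ n"
  have c: "norm c = \<bar>k1\<bar> ^ n" "c \<noteq> 0"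
    using k1 by (simp_all add: c_def norm_mult norm_power)
  have T: "0 \<le> pi - 2 * arctan s"
    using arctan_bounded[of s] by simp
  have int1: "(\<lambda>y. partial_transform s y / c * ef k2 y) integrable_on {-r..r}"
    using c by (intro integrable_continuous_real continuous_intros
        continuous_on_subset[OF continuous_on_partial_transform subset_UNIV]) auto
  have int2: "(\<lambda>y. transform y / c * ef k2 y) integrable_on {-r..r}"
    using integrable_on_subinterval[OF integrable_transform_ef subset_UNIV] by (simp add: c_def)
  have "integral {-r..r} (\<lambda>y. partial_transform s y / c * ef k2 y) - integral {-r..r} (\<lambda>y. transform y / c * ef k2 y)
      = integral {-r..r} (\<lambda>y. partial_transform s y / c * ef k2 y - transform y / c * ef k2 y)"
    by (rule integral_diff[OF int1 int2, symmetric])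
  also have "norm \<dots> \<le> A * (pi - 2 * arctan s) / \<bar>k1\<bar> ^ n * (arctan r - arctan (- r))"
  proof (rule norm_integral_le_arctan)
    show "(\<lambda>y. partial_transform s y / c * ef k2 y - transform y / c * ef k2 y) integrable_on {-r..r}"
      by (rule integrable_diff[OF int1 int2])
    fix y
    have "norm (partial_transform s y / c * ef k2 y - transform y / c * ef k2 y)
        = norm (transform y - partial_transform s y) / \<bar>k1\<bar> ^ n"
      using c by (simp add: norm_mult norm_divide norm_minus_commute flip: left_diff_distrib diff_divide_distrib)
    also have "\<dots> \<le> A / (1 + y\<^sup>2) * (pi - 2 * arctan s) / \<bar>k1\<bar> ^ n"
      by (intro divide_right_mono norm_transform_minus_partial_le s) simp
    finally show "norm (partial_transform s y / c * ef k2 y - transform y / c * ef k2 y)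
        \<le> A * (pi - 2 * arctan s) / \<bar>k1\<bar> ^ n / (1 + y\<^sup>2)"
      by (simp add: field_simps)
  qed (use r in simp)
  also have "\<dots> \<le> A * (pi - 2 * arctan s) / \<bar>k1\<bar> ^ n * pi"
    using arctan_bounded[of r] A T by (intro mult_left_mono) (auto simp: arctan_minus)
  finally show ?thesis
    unfolding c_def .
qed

lemma integral_partial_iterated_by_parts:
  assumes r: "0 \<le> r" and s: "0 \<le> s"
  shows "integral {-r..r} (\<lambda>y. integral {-s..s} (\<lambda>x. of_real (h 0 x y) * ef k1 x * ef k2 y)) =
    integral {-r..r} (\<lambda>y. partial_transform s y * ef k2 y) / (\<i> * of_real k1) ^ n
    - (\<Sum>j<n. integral {-r..r} (\<lambda>y. boundary_term (\<lambda>x. h j x y) k1 s * ef k2 y) / (\<i> * of_real k1) ^ Suc j)"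
proof -
  have inner: "integral {-s..s} (\<lambda>x. of_real (h 0 x y) * ef k1 x * ef k2 y) =
      partial_transform s y * ef k2 y / (\<i> * of_real k1) ^ n
      - (\<Sum>j<n. boundary_term (\<lambda>x. h j x y) k1 s * ef k2 y / (\<i> * of_real k1) ^ Suc j)" for y
  proof -
    have "integral {-s..s} (\<lambda>x. of_real (h 0 x y) * ef k1 x) =
        partial_transform s y / (\<i> * of_real k1) ^ n
        - (\<Sum>j<n. boundary_term (\<lambda>x. h j x y) k1 s / (\<i> * of_real k1) ^ Suc j)"
      using s h_deriv continuous_on_curried[OF h_cont continuous_on_id continuous_on_const]
      by (intro integral_by_parts_ef_iterated[OF k1, where h = "\<lambda>j x. h j x y"]) auto
    then show ?thesis
      by (simp add: left_diff_distrib sum_distrib_right)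
  qed
  have int_partial: "(\<lambda>y. partial_transform s y * ef k2 y) integrable_on {-r..r}"
    by (intro integrable_continuous_real continuous_intros
        continuous_on_subset[OF continuous_on_partial_transform subset_UNIV])
  have int_boundary: "(\<lambda>y. boundary_term (\<lambda>x. h j x y) k1 s * ef k2 y) integrable_on {-r..r}" if "j < n" for j
    unfolding boundary_term_def using that
    by (intro integrable_continuous_real continuous_intros continuous_on_curried[OF h_cont]) auto
  have "integral {-r..r} (\<lambda>y. partial_transform s y * ef k2 y / (\<i> * of_real k1) ^ n
      - (\<Sum>j<n. boundary_term (\<lambda>x. h j x y) k1 s * ef k2 y / (\<i> * of_real k1) ^ Suc j)) =
    integral {-r..r} (\<lambda>y. partial_transform s y * ef k2 y / (\<i> * of_real k1) ^ n)
      - integral {-r..r} (\<lambda>y. \<Sum>j<n. boundary_term (\<lambda>x. h j x y) k1 s * ef k2 y / (\<i> * of_real k1) ^ Suc j)"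
    by (intro integral_diff integrable_on_divide integrable_sum int_partial int_boundary) auto
  also have "integral {-r..r} (\<lambda>y. \<Sum>j<n. boundary_term (\<lambda>x. h j x y) k1 s * ef k2 y / (\<i> * of_real k1) ^ Suc j)
      = (\<Sum>j<n. integral {-r..r} (\<lambda>y. boundary_term (\<lambda>x. h j x y) k1 s * ef k2 y / (\<i> * of_real k1) ^ Suc j))"
    by (intro integral_sum integrable_on_divide int_boundary) auto
  finally show ?thesis
    unfolding inner by (simp only: integral_divide)
qed

lemma norm_iterated_integral_minus_limit_le:
  assumes r: "0 \<le> r" and s: "1 \<le> s"
  shows "norm (integral {-r..r} (\<lambda>y. integral {-s..s} (\<lambda>x. of_real (h 0 x y) * ef k1 x * ef k2 y))
      - integral UNIV (\<lambda>y. transform y / (\<i> * of_real k1) ^ n * ef k2 y))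
    \<le> norm (integral {-r..r} (\<lambda>y. transform y / (\<i> * of_real k1) ^ n * ef k2 y)
        - integral UNIV (\<lambda>y. transform y / (\<i> * of_real k1) ^ n * ef k2 y))
      + (A * (pi - 2 * arctan s) / \<bar>k1\<bar> ^ n * pi
        + (2 * (A * pi + 2 * A) / \<bar>k2\<bar> + 2 * A * pi) * (\<Sum>j<n. 1 / \<bar>k1\<bar> ^ Suc j) / s)"
proof -
  define c where "c = \<i> * of_real k1"
  define K where "K = 2 * (A * pi + 2 * A) / \<bar>k2\<bar> + 2 * A * pi"
  define E where "E j = integral {-r..r} (\<lambda>y. boundary_term (\<lambda>x. h j x y) k1 s * ef k2 y)" for j
  define M where "M = integral {-r..r} (\<lambda>y. partial_transform s y / c ^ n * ef k2 y)"
  define I where "I = integral {-r..r} (\<lambda>y. transform y / c ^ n * ef k2 y)"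
  define L where "L = integral UNIV (\<lambda>y. transform y / c ^ n * ef k2 y)"
  have norm_c: "norm (c ^ m) = \<bar>k1\<bar> ^ m" for m
    by (simp add: c_def norm_mult norm_power)
  have "norm (\<Sum>j<n. E j / c ^ Suc j) \<le> (\<Sum>j<n. K / s / \<bar>k1\<bar> ^ Suc j)"
  proof (rule order_trans[OF norm_sum sum_mono])
    fix j assume "j \<in> {..<n}"
    then have "norm (E j) \<le> K / s"
      using norm_integral_boundary_term_ef_le[of j s r] r s by (simp add: E_def K_def)
    then show "norm (E j / c ^ Suc j) \<le> K / s / \<bar>k1\<bar> ^ Suc j"
      unfolding norm_divide norm_c by (rule divide_right_mono) simp
  qed
  also have "\<dots> = K * (\<Sum>j<n. 1 / \<bar>k1\<bar> ^ Suc j) / s"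
    unfolding sum_distrib_left sum_divide_distrib by (rule sum.cong) (simp_all add: field_simps)
  finally have E: "norm (\<Sum>j<n. E j / c ^ Suc j) \<le> K * (\<Sum>j<n. 1 / \<bar>k1\<bar> ^ Suc j) / s" .
  have "integral {-r..r} (\<lambda>y. integral {-s..s} (\<lambda>x. of_real (h 0 x y) * ef k1 x * ef k2 y)) - L
      = (M - I) + (I - L) - (\<Sum>j<n. E j / c ^ Suc j)"
    unfolding integral_partial_iterated_by_parts[OF r order_trans[OF zero_le_one s]]
    by (simp add: M_def E_def c_def)
  also have "norm \<dots> \<le> norm (M - I) + norm (I - L) + norm (\<Sum>j<n. E j / c ^ Suc j)"
    by (rule order_trans[OF norm_triangle_ineq4 add_right_mono[OF norm_triangle_ineq]])
  also have "\<dots> \<le> A * (pi - 2 * arctan s) / \<bar>k1\<bar> ^ n * pi + norm (I - L) + K * (\<Sum>j<n. 1 / \<bar>k1\<bar> ^ Suc j) / s"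
    using norm_integral_partial_transform_minus_transform_le[OF r] s E
    unfolding M_def I_def c_def by (intro add_mono) auto
  finally show ?thesis
    by (simp add: I_def L_def K_def c_def)
qed

lemma tendsto_iterated_integral_by_parts:
  "((\<lambda>(r, s). integral {-r..r} (\<lambda>y. integral {-s..s} (\<lambda>x. of_real (h 0 x y) * ef k1 x * ef k2 y)))
    \<longlongrightarrow> integral UNIV (\<lambda>y. transform y / (\<i> * of_real k1) ^ n * ef k2 y)) (at_top \<times>\<^sub>F at_top)"
proof (rule tendsto_at_top_prod_at_top_of_bound[where R = 0 and S = 1])
  show "((\<lambda>r. norm (integral {-r..r} (\<lambda>y. transform y / (\<i> * of_real k1) ^ n * ef k2 y)
      - integral UNIV (\<lambda>y. transform y / (\<i> * of_real k1) ^ n * ef k2 y))) \<longlongrightarrow> 0) at_top"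
    by (intro tendsto_norm_zero LIM_zero tendsto_integral_symmetric integrable_transform_ef)
  have "((\<lambda>s. A * (pi - 2 * arctan s) / \<bar>k1\<bar> ^ n * pi) \<longlongrightarrow> A * 0 / \<bar>k1\<bar> ^ n * pi) at_top"
    by (intro tendsto_intros tendsto_pi_minus_arctan) (use k1 in simp)
  moreover have "((\<lambda>s. (2 * (A * pi + 2 * A) / \<bar>k2\<bar> + 2 * A * pi) * (\<Sum>j<n. 1 / \<bar>k1\<bar> ^ Suc j) / s) \<longlongrightarrow> 0) at_top"
    by (intro tendsto_divide_0[OF tendsto_const] filterlim_at_top_imp_at_infinity filterlim_ident)
  ultimately show "((\<lambda>s. A * (pi - 2 * arctan s) / \<bar>k1\<bar> ^ n * pi
      + (2 * (A * pi + 2 * A) / \<bar>k2\<bar> + 2 * A * pi) * (\<Sum>j<n. 1 / \<bar>k1\<bar> ^ Suc j) / s) \<longlongrightarrow> 0) at_top"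
    using tendsto_add by fastforce
qed (use norm_iterated_integral_minus_limit_le in simp)

end

fun along :: "var3 \<Rightarrow> real \<Rightarrow> real \<times> real \<Rightarrow> real \<times> real \<times> real" where
  "along VX t q = (t, fst q, snd q)"
| "along VY t q = (fst q, t, snd q)"
| "along VZ t q = (fst q, snd q, t)"

lemma continuous_on_along [continuous_intros]:
  "continuous_on S g \<Longrightarrow> continuous_on S q \<Longrightarrow> continuous_on S (\<lambda>x. along d (g x) (q x))"
  by (cases d) (auto intro!: continuous_on_Pair continuous_on_fst continuous_on_snd)

lemma norm_along_sq: "(norm (along d t q))\<^sup>2 = t\<^sup>2 + (norm q)\<^sup>2"
proof -
  obtain a b where q: "q = (a, b)"
    by (cases q)
  have n3: "(norm (x::real, y::real, z::real))\<^sup>2 = x\<^sup>2 + y\<^sup>2 + z\<^sup>2" for x y z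
    by (simp add: norm_Pair add.assoc)
  have n2: "(norm (a, b))\<^sup>2 = a\<^sup>2 + b\<^sup>2"
    by (simp add: norm_Pair)
  show ?thesis
    by (cases d) (simp_all add: q n3 n2)
qed

lemma abs_le_norm_along: "\<bar>t\<bar> \<le> norm (along d t q)"
  by (rule power2_le_imp_le) (simp_all add: norm_along_sq)

lemma norm_le_norm_along: "norm q \<le> norm (along d t q)"
  by (rule power2_le_imp_le) (simp_all add: norm_along_sq)

lemma has_real_derivative_along:
  assumes "smooth3 f"
  shows "((\<lambda>s. pdw w f (along d s q)) has_real_derivative pdw (d # w) f (along d t q)) (at t)"
proof -
  obtain a b where q: "q = (a, b)"
    by (cases q)
  have D: "((\<lambda>s. pdw w f (s, y, z)) has_real_derivative pdw (VX # w) f (x, y, z)) (at x)"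
    "((\<lambda>s. pdw w f (x, s, z)) has_real_derivative pdw (VY # w) f (x, y, z)) (at y)"
    "((\<lambda>s. pdw w f (x, y, s)) has_real_derivative pdw (VZ # w) f (x, y, z)) (at z)" for x y z
    using assms unfolding smooth3_def by (auto simp: DERIV_deriv_iff_real_differentiable)
  show ?thesis
    unfolding q by (cases d) (simp_all only: along.simps fst_conv snd_conv D)
qed

lemma continuous_on_pdw: "smooth3 f \<Longrightarrow> continuous_on UNIV (pdw w f)"
  unfolding smooth3_def by blast

lemma global_bound_of_decay:
  fixes g :: "'a::{real_normed_vector, heine_borel} \<Rightarrow> real"
  assumes g: "continuous_on UNIV g" and decay: "\<And>p. 1 < norm p \<Longrightarrow> \<bar>g p\<bar> \<le> C / norm p ^ m"
  shows "\<exists>B\<ge>0. \<forall>p. \<bar>g p\<bar> \<le> B / (1 + norm p) ^ m"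
proof -
  have "bounded (g ` cball 0 1)"
    by (intro compact_imp_bounded compact_continuous_image continuous_on_subset[OF g]) auto
  then obtain M where "\<forall>p\<in>cball 0 1. \<bar>g p\<bar> \<le> M"
    by (auto simp: bounded_iff)
  then have M: "\<And>p. p \<in> cball 0 1 \<Longrightarrow> \<bar>g p\<bar> \<le> M"
    by blast
  define B where "B = max M (max C 0) * 2 ^ m"
  have "\<bar>g p\<bar> * (1 + norm p) ^ m \<le> B" for p
  proof (cases "norm p \<le> 1")
    case True
    then have "\<bar>g p\<bar> \<le> max M (max C 0)" "(1 + norm p) ^ m \<le> 2 ^ m"
      using M[of p] by (auto intro!: power_mono)
    then show ?thesis
      unfolding B_def by (intro mult_mono) auto
  next
    case False
    have "C / norm p ^ m \<le> max C 0 / norm p ^ m"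
      by (intro divide_right_mono) auto
    then have "\<bar>g p\<bar> \<le> max C 0 / norm p ^ m"
      using decay[of p] False by simp
    moreover have "(1 + norm p) ^ m \<le> (2 * norm p) ^ m"
      using False by (intro power_mono) auto
    ultimately have "\<bar>g p\<bar> * (1 + norm p) ^ m \<le> max C 0 / norm p ^ m * (2 * norm p) ^ m"
      by (intro mult_mono) auto
    also have "\<dots> = max C 0 * 2 ^ m"
      using False by (auto simp: power_mult_distrib)
    also have "\<dots> \<le> B"
      unfolding B_def by (intro mult_right_mono) auto
    finally show ?thesis .
  qed
  then have "\<bar>g p\<bar> \<le> B / (1 + norm p) ^ m" for p
    by (simp add: pos_le_divide_eq add_pos_nonneg)
  moreover have "0 \<le> B"
    unfolding B_def by simp
  ultimately show ?thesis
    by blast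
qed

lemma smooth3_if_normal3: "normal3 f \<Longrightarrow> smooth3 f"
  by (simp add: normal3_def)

lemma normal3_pure_partial_decay:
  assumes "normal3 f"
  shows "\<exists>C. \<forall>p. 1 < norm p \<longrightarrow> \<bar>pdw (replicate n d) f p\<bar> \<le> C / norm p ^ (n + 1)"
proof (cases "n = 0")
  case True
  with assms show ?thesis
    unfolding normal3_def by simp
next
  case False
  from assms have "\<forall>i j k. 1 \<le> i + j + k \<longrightarrow>
      (\<exists>C. \<forall>p. 1 < norm p \<longrightarrow> \<bar>partial3 i j k f p\<bar> \<le> C / norm p ^ (i + j + k + 1))"
    unfolding normal3_def by blast
  from this[rule_format, of n 0 0] this[rule_format, of 0 n 0] this[rule_format, of 0 0 n] False
  show ?thesis
    by (cases d) (simp_all add: partial3_def)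
qed

lemma UNIV_var3: "(UNIV :: var3 set) = {VX, VY, VZ}"
  using var3.exhaust by auto

lemma normal3_pure_partial_bound:
  assumes "normal3 f"
  obtains B where "0 \<le> B" "\<And>d n p. n \<le> 3 \<Longrightarrow> \<bar>pdw (replicate n d) f p\<bar> \<le> B / (1 + norm p) ^ (n + 1)"
proof -
  define I :: "(var3 \<times> nat) set" where "I = UNIV \<times> {..3}"
  have "finite I"
    by (simp add: I_def UNIV_var3)
  moreover have "\<forall>i\<in>I. \<exists>B. 0 \<le> B \<and> (\<forall>p. \<bar>pdw (replicate (snd i) (fst i)) f p\<bar> \<le> B / (1 + norm p) ^ (snd i + 1))"
    using normal3_pure_partial_decay[OF assms]
    by (metis global_bound_of_decay continuous_on_pdw smooth3_if_normal3[OF assms])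
  ultimately obtain Bi where Bi: "\<And>i. i \<in> I \<Longrightarrow> 0 \<le> Bi i"
    "\<And>i p. i \<in> I \<Longrightarrow> \<bar>pdw (replicate (snd i) (fst i)) f p\<bar> \<le> Bi i / (1 + norm p) ^ (snd i + 1)"
    by (metis finite_set_choice)
  show ?thesis
  proof (rule that)
    show "0 \<le> sum Bi I"
      by (intro sum_nonneg Bi)
    fix d n and p :: "real \<times> real \<times> real"
    assume "n \<le> (3::nat)"
    then have i: "(d, n) \<in> I"
      by (simp add: I_def)
    have "Bi (d, n) \<le> sum Bi I"
      using \<open>finite I\<close> Bi(1) by (intro member_le_sum i) auto
    then have "Bi (d, n) / (1 + norm p) ^ (n + 1) \<le> sum Bi I / (1 + norm p) ^ (n + 1)"
      by (intro divide_right_mono) auto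
    with Bi(2)[OF i, of p] show "\<bar>pdw (replicate n d) f p\<bar> \<le> sum Bi I / (1 + norm p) ^ (n + 1)"
      by simp
  qed
qed

lemma tendsto_zero_of_inverse_bound:
  fixes h :: "real \<Rightarrow> real"
  assumes "\<And>t. \<bar>h t\<bar> \<le> B / (1 + \<bar>t\<bar>)"
  shows "(h \<longlongrightarrow> 0) at_top" "(h \<longlongrightarrow> 0) at_bot"
proof -
  have "((\<lambda>t. B / (1 + \<bar>t\<bar>)) \<longlongrightarrow> 0) at_top" "((\<lambda>t. B / (1 + \<bar>t\<bar>)) \<longlongrightarrow> 0) at_bot"
    by real_asymp+
  then show "(h \<longlongrightarrow> 0) at_top" "(h \<longlongrightarrow> 0) at_bot"
    by (auto intro: Lim_null_comparison[rotated] simp: assms)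
qed

section \<open>Transforms along a coordinate axis\<close>

definition axis_transform :: "(real \<times> real \<times> real \<Rightarrow> real) \<Rightarrow> var3 \<Rightarrow> real \<Rightarrow> real \<times> real \<Rightarrow> complex" where
  "axis_transform f d k q = Lim at_top (\<lambda>r. integral {-r..r} (\<lambda>t. of_real (f (along d t q)) * ef k t))"

lemma normal3_along_bounds:
  assumes f: "normal3 f"
  obtains B where "\<And>j t. j < 3 \<Longrightarrow> \<bar>pdw (replicate j d) f (along d t q)\<bar> \<le> B / (1 + \<bar>t\<bar>)"
    "\<And>t. \<bar>pdw (replicate 3 d) f (along d t q)\<bar> \<le> B / (1 + t\<^sup>2)"
proof -
  obtain B where B: "0 \<le> B" "\<And>d n p. n \<le> 3 \<Longrightarrow> \<bar>pdw (replicate n d) f p\<bar> \<le> B / (1 + norm p) ^ (n + 1)"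
    using normal3_pure_partial_bound[OF f] by blast
  have le: "\<bar>pdw (replicate j d) f (along d t q)\<bar> \<le> B / a"
    if "j \<le> 3" "0 < a" "a \<le> (1 + norm (along d t q)) ^ (j + 1)" for j t a
  proof -
    have "\<bar>pdw (replicate j d) f (along d t q)\<bar> \<le> B / (1 + norm (along d t q)) ^ (j + 1)"
      by (rule B(2)[OF that(1)])
    also have "\<dots> \<le> B / a"
      using B(1) that(2,3) by (intro divide_left_mono) auto
    finally show ?thesis .
  qed
  show ?thesis
  proof (rule that)
    fix j and t :: real
    assume "j < (3::nat)"
    have "1 + \<bar>t\<bar> \<le> (1 + norm (along d t q)) ^ 1"
      using abs_le_norm_along[of t d q] by simp
    also have "\<dots> \<le> (1 + norm (along d t q)) ^ (j + 1)"
      by (intro power_increasing) auto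
    finally show "\<bar>pdw (replicate j d) f (along d t q)\<bar> \<le> B / (1 + \<bar>t\<bar>)"
      using \<open>j < 3\<close> by (intro le) auto
  next
    fix t :: real
    have "1 + t\<^sup>2 \<le> (1 + \<bar>t\<bar>) ^ 2"
      by (simp add: power2_eq_square algebra_simps)
    also have "\<dots> \<le> (1 + norm (along d t q)) ^ 2"
      using abs_le_norm_along[of t d q] by (intro power_mono) auto
    also have "\<dots> \<le> (1 + norm (along d t q)) ^ (3 + 1)"
      by (intro power_increasing) auto
    finally show "\<bar>pdw (replicate 3 d) f (along d t q)\<bar> \<le> B / (1 + t\<^sup>2)"
      by (intro le) (auto simp: add_pos_nonneg)
  qed
qed

lemma axis_transform_by_parts:
  assumes f: "normal3 f" and k: "k \<noteq> 0"
  shows "(\<lambda>t. of_real (pdw (replicate 3 d) f (along d t q)) * ef k t) integrable_on UNIV"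
    and "((\<lambda>r. integral {-r..r} (\<lambda>t. of_real (f (along d t q)) * ef k t)) \<longlongrightarrow>
      integral UNIV (\<lambda>t. of_real (pdw (replicate 3 d) f (along d t q)) * ef k t) / (\<i> * of_real k) ^ 3) at_top"
proof -
  obtain B where B: "\<And>j t. j < 3 \<Longrightarrow> \<bar>pdw (replicate j d) f (along d t q)\<bar> \<le> B / (1 + \<bar>t\<bar>)"
    "\<And>t. \<bar>pdw (replicate 3 d) f (along d t q)\<bar> \<le> B / (1 + t\<^sup>2)"
    using normal3_along_bounds[OF f] by blast
  define h where "h j t = pdw (replicate j d) f (along d t q)" for j t
  have deriv: "(h j has_real_derivative h (Suc j) t) (at t)" for j t
    unfolding h_def replicate_Suc by (rule has_real_derivative_along[OF smooth3_if_normal3[OF f]])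
  have cont: "continuous_on UNIV (h 3)"
    unfolding h_def by (intro continuous_on_compose2[OF continuous_on_pdw[OF smooth3_if_normal3[OF f]]]
      continuous_intros) auto
  have lim: "(h j \<longlongrightarrow> 0) at_top" "(h j \<longlongrightarrow> 0) at_bot" if "j < 3" for j
    using tendsto_zero_of_inverse_bound[OF B(1)[OF that]] unfolding h_def by auto
  note by_parts = tendsto_integral_by_parts_ef[OF k deriv cont lim B(2)[unfolded h_def[symmetric]]]
  show "(\<lambda>t. of_real (pdw (replicate 3 d) f (along d t q)) * ef k t) integrable_on UNIV"
    using by_parts(1) unfolding h_def .
  show "((\<lambda>r. integral {-r..r} (\<lambda>t. of_real (f (along d t q)) * ef k t)) \<longlongrightarrow>
      integral UNIV (\<lambda>t. of_real (pdw (replicate 3 d) f (along d t q)) * ef k t) / (\<i> * of_real k) ^ 3) at_top"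
    using by_parts(2) unfolding h_def replicate_0 pdw.simps(1) .
qed

lemma axis_transform_eq:
  "normal3 f \<Longrightarrow> k \<noteq> 0 \<Longrightarrow> axis_transform f d k q =
    integral UNIV (\<lambda>t. of_real (pdw (replicate 3 d) f (along d t q)) * ef k t) / (\<i> * of_real k) ^ 3"
  unfolding axis_transform_def by (intro tendsto_Lim axis_transform_by_parts) auto

lemma tendsto_axis_transform:
  assumes "normal3 f" "k \<noteq> 0"
  shows "((\<lambda>r. integral {-r..r} (\<lambda>t. of_real (f (along d t q)) * ef k t)) \<longlongrightarrow> axis_transform f d k q) at_top"
  unfolding axis_transform_eq[OF assms] by (rule axis_transform_by_parts(2)[OF assms])

lemma abs_le_of_quartic_decay_along:
  fixes g :: "real \<times> real \<times> real \<Rightarrow> real"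
  assumes decay: "\<And>p. 1 < norm p \<Longrightarrow> \<bar>g p\<bar> \<le> C / norm p ^ 4" and q: "1 < norm q"
  shows "\<bar>g (along d t q)\<bar> \<le> max C 0 / (norm q)\<^sup>2 / (t\<^sup>2 + (norm q)\<^sup>2)"
proof -
  define X where "X = t\<^sup>2 + (norm q)\<^sup>2"
  have X: "(norm q)\<^sup>2 \<le> X" "0 < (norm q)\<^sup>2" "0 < X"
    using q by (auto simp: X_def intro!: add_nonneg_pos)
  have "norm (along d t q) ^ 4 = ((norm (along d t q))\<^sup>2)\<^sup>2"
    by (simp flip: power_mult)
  also have "\<dots> = X * X"
    unfolding norm_along_sq X_def by (simp add: power2_eq_square)
  finally have n4: "norm (along d t q) ^ 4 = X * X" .
  have "1 < norm (along d t q)"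
    using norm_le_norm_along[of q d t] q by simp
  then have "\<bar>g (along d t q)\<bar> \<le> max C 0 / norm (along d t q) ^ 4"
    using decay[of "along d t q"] divide_right_mono[of C "max C 0" "norm (along d t q) ^ 4"] by simp
  also have "\<dots> = max C 0 / X / X"
    by (simp add: n4 divide_divide_eq_left)
  also have "\<dots> \<le> max C 0 / (norm q)\<^sup>2 / X"
    using X by (intro divide_right_mono divide_left_mono) simp_all
  finally show ?thesis
    by (simp add: X_def)
qed

lemma axis_transform_decay:
  assumes f: "normal3 f" and k: "k \<noteq> 0"
  shows "\<exists>C. \<forall>q. 1 < norm q \<longrightarrow> norm (axis_transform f d k q) \<le> C / norm q ^ 3"
proof -
  obtain C where C: "\<And>p. 1 < norm p \<Longrightarrow> \<bar>pdw (replicate 3 d) f p\<bar> \<le> C / norm p ^ 4"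
    using normal3_pure_partial_decay[OF f, of 3 d] by auto
  have "norm (axis_transform f d k q) \<le> max C 0 * pi / \<bar>k\<bar> ^ 3 / norm q ^ 3" if q: "1 < norm q" for q
  proof -
    have "norm (integral UNIV (\<lambda>t. of_real (pdw (replicate 3 d) f (along d t q)) * ef k t))
        \<le> max C 0 / (norm q)\<^sup>2 * pi / norm q"
      using abs_le_of_quartic_decay_along[OF C q] q
      by (intro norm_integral_UNIV_le_pi_div axis_transform_by_parts(1)[OF f k]) (auto simp: norm_mult)
    also have "\<dots> = max C 0 * pi / norm q ^ 3"
      by (simp add: power2_eq_square power3_eq_cube)
    finally have I: "norm (integral UNIV (\<lambda>t. of_real (pdw (replicate 3 d) f (along d t q)) * ef k t))
        \<le> max C 0 * pi / norm q ^ 3" .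
    have "norm (axis_transform f d k q) =
        norm (integral UNIV (\<lambda>t. of_real (pdw (replicate 3 d) f (along d t q)) * ef k t)) / \<bar>k\<bar> ^ 3"
      unfolding axis_transform_eq[OF f k] by (simp add: norm_divide norm_mult norm_power)
    also have "\<dots> \<le> max C 0 * pi / norm q ^ 3 / \<bar>k\<bar> ^ 3"
      using I by (rule divide_right_mono) simp
    finally show ?thesis
      by (simp add: divide_divide_eq_left mult.commute)
  qed
  then show ?thesis
    by blast
qed

section \<open>Transforms over a coordinate plane\<close>

lemma norm_along_plane_sq:
  assumes plane: "\<And>s t. along d s (Q t) = along d' t (R s)"
  shows "x\<^sup>2 + y\<^sup>2 \<le> (norm (along d x (Q y)))\<^sup>2"
proof -
  have "(norm (Q y))\<^sup>2 = y\<^sup>2 + (norm (R 0))\<^sup>2"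
    using norm_along_sq[of d 0 "Q y"] norm_along_sq[of d' y "R 0"] plane[of 0 y] by simp
  then show ?thesis
    using norm_along_sq[of d x "Q y"] by simp
qed

lemma one_add_sq_mult_one_add_sq_le: "(1 + x\<^sup>2) * (1 + y\<^sup>2) \<le> (1 + x\<^sup>2 + y\<^sup>2 :: real)\<^sup>2"
proof -
  have "(1 + x\<^sup>2 + y\<^sup>2)\<^sup>2 = (1 + x\<^sup>2) * (1 + y\<^sup>2) + (x\<^sup>2 + y\<^sup>2 + x\<^sup>2 * x\<^sup>2 + x\<^sup>2 * y\<^sup>2 + y\<^sup>2 * y\<^sup>2)"
    by (simp add: power2_eq_square algebra_simps)
  moreover have "0 \<le> x\<^sup>2 + y\<^sup>2 + x\<^sup>2 * x\<^sup>2 + x\<^sup>2 * y\<^sup>2 + y\<^sup>2 * y\<^sup>2"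
    by (intro add_nonneg_nonneg mult_nonneg_nonneg) auto
  ultimately show ?thesis
    by linarith
qed

lemma normal3_plane_bounds:
  assumes f: "normal3 f" and plane: "\<And>s t. along d s (Q t) = along d' t (R s)"
  obtains B where "0 \<le> B"
    "\<And>x y. 1 \<le> \<bar>x\<bar> \<Longrightarrow> \<bar>f (along d x (Q y))\<bar> \<le> B / \<bar>x\<bar>"
    "\<And>j x y. 0 < j \<Longrightarrow> j < 3 \<Longrightarrow> \<bar>pdw (replicate j d) f (along d x (Q y))\<bar> \<le> B / (1 + x\<^sup>2 + y\<^sup>2)"
    "\<And>x y. \<bar>pdw [d'] f (along d x (Q y))\<bar> \<le> B / (1 + x\<^sup>2 + y\<^sup>2)"
    "\<And>x y. \<bar>pdw (replicate 3 d) f (along d x (Q y))\<bar> \<le> B / ((1 + x\<^sup>2) * (1 + y\<^sup>2))"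
proof -
  obtain B where B: "0 \<le> B" "\<And>d n p. n \<le> 3 \<Longrightarrow> \<bar>pdw (replicate n d) f p\<bar> \<le> B / (1 + norm p) ^ (n + 1)"
    using normal3_pure_partial_bound[OF f] by blast
  have le: "\<bar>pdw (replicate n e) f (along d x (Q y))\<bar> \<le> B / a"
    if "n \<le> 3" "0 < a" "a \<le> (1 + norm (along d x (Q y))) ^ (n + 1)" for n e x y a
  proof -
    have "\<bar>pdw (replicate n e) f (along d x (Q y))\<bar> \<le> B / (1 + norm (along d x (Q y))) ^ (n + 1)"
      by (rule B(2)[OF that(1)])
    also have "\<dots> \<le> B / a"
      using B(1) that(2,3) by (intro divide_left_mono) auto
    finally show ?thesis .
  qed
  have sq_le: "1 + x\<^sup>2 + y\<^sup>2 \<le> (1 + norm (along d x (Q y))) ^ m" if "2 \<le> m" for x y m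
  proof -
    have "1 + x\<^sup>2 + y\<^sup>2 \<le> 1 + (norm (along d x (Q y)))\<^sup>2"
      using norm_along_plane_sq[OF plane, of x y] by simp
    also have "\<dots> \<le> (1 + norm (along d x (Q y))) ^ 2"
      by (simp add: power2_eq_square algebra_simps)
    also have "\<dots> \<le> (1 + norm (along d x (Q y))) ^ m"
      using that by (intro power_increasing) auto
    finally show ?thesis .
  qed
  show ?thesis
  proof (rule that[OF B(1)])
    show "\<bar>f (along d x (Q y))\<bar> \<le> B / \<bar>x\<bar>" if "1 \<le> \<bar>x\<bar>" for x y
      using le[where n = 0 and a = "\<bar>x\<bar>"] that abs_le_norm_along[of x d "Q y"] by simp
    show "\<bar>pdw (replicate j d) f (along d x (Q y))\<bar> \<le> B / (1 + x\<^sup>2 + y\<^sup>2)" if "0 < j" "j < 3" for j x y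
      using that by (intro le sq_le) (auto simp: add_pos_nonneg)
    show "\<bar>pdw [d'] f (along d x (Q y))\<bar> \<le> B / (1 + x\<^sup>2 + y\<^sup>2)" for x y
      using le[where n = 1 and e = d' and a = "1 + x\<^sup>2 + y\<^sup>2" and x = x and y = y] sq_le[of 2 x y] by (simp add: add_pos_nonneg power2_eq_square)
    show "\<bar>pdw (replicate 3 d) f (along d x (Q y))\<bar> \<le> B / ((1 + x\<^sup>2) * (1 + y\<^sup>2))" for x y
    proof (rule le)
      have "(1 + x\<^sup>2) * (1 + y\<^sup>2) \<le> ((1 + norm (along d x (Q y))) ^ 2)\<^sup>2"
        using order_trans[OF one_add_sq_mult_one_add_sq_le power_mono[OF sq_le[of 2 x y]]] by simp
      then show "(1 + x\<^sup>2) * (1 + y\<^sup>2) \<le> (1 + norm (along d x (Q y))) ^ (3 + 1)"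
        by (simp flip: power_mult)
    qed (auto simp: add_pos_nonneg)
  qed
qed

text \<open>The hypothesis on \<open>Q\<close> and \<open>R\<close> says that \<open>(s, t)\<close> are coordinates on a coordinate
  plane, \<open>s\<close> along the axis \<open>d\<close> and \<open>t\<close> along the axis \<open>d'\<close>.\<close>

lemma iterated_transform_by_parts:
  assumes f: "normal3 f" and k1: "k1 \<noteq> 0" and k2: "k2 \<noteq> 0"
    and Q: "continuous_on UNIV Q" and R: "continuous_on UNIV R"
    and plane: "\<And>s t. along d s (Q t) = along d' t (R s)"
  shows "(\<lambda>t. axis_transform f d k1 (Q t) * ef k2 t) integrable_on UNIV"
    and "((\<lambda>(r, s). integral {-r..r} (\<lambda>t. integral {-s..s} (\<lambda>x. of_real (f (along d x (Q t))) * ef k1 x * ef k2 t)))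
      \<longlongrightarrow> integral UNIV (\<lambda>t. axis_transform f d k1 (Q t) * ef k2 t)) (at_top \<times>\<^sub>F at_top)"
proof -
  obtain B where B: "0 \<le> B"
    "\<And>x y. 1 \<le> \<bar>x\<bar> \<Longrightarrow> \<bar>f (along d x (Q y))\<bar> \<le> B / \<bar>x\<bar>"
    "\<And>j x y. 0 < j \<Longrightarrow> j < 3 \<Longrightarrow> \<bar>pdw (replicate j d) f (along d x (Q y))\<bar> \<le> B / (1 + x\<^sup>2 + y\<^sup>2)"
    "\<And>x y. \<bar>pdw [d'] f (along d x (Q y))\<bar> \<le> B / (1 + x\<^sup>2 + y\<^sup>2)"
    "\<And>x y. \<bar>pdw (replicate 3 d) f (along d x (Q y))\<bar> \<le> B / ((1 + x\<^sup>2) * (1 + y\<^sup>2))"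
    using normal3_plane_bounds[OF f plane] by blast
  have smooth: "smooth3 f"
    by (rule smooth3_if_normal3[OF f])
  define h where "h j x y = pdw (replicate j d) f (along d x (Q y))" for j x y
  define hy where "hy x y = pdw [d'] f (along d' y (R x))" for x y
  have h_deriv: "((\<lambda>t. h j t y) has_real_derivative h (Suc j) x y) (at x)" for j x y
    unfolding h_def replicate_Suc by (rule has_real_derivative_along[OF smooth])
  have hy_deriv: "((\<lambda>t. h 0 x t) has_real_derivative hy x y) (at y)" for x y
    unfolding h_def hy_def replicate_0 plane by (rule has_real_derivative_along[OF smooth])
  have h_cont: "continuous_on UNIV (case_prod (h j))" for j
    unfolding h_def split_def
    by (intro continuous_on_compose2[OF continuous_on_pdw[OF smooth]] continuous_intros
        continuous_on_compose2[OF Q]) auto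
  have hy_cont: "continuous_on UNIV (case_prod hy)"
    unfolding hy_def split_def
    by (intro continuous_on_compose2[OF continuous_on_pdw[OF smooth]] continuous_intros
        continuous_on_compose2[OF R]) auto
  have transform: "integral UNIV (\<lambda>x. of_real (h 3 x y) * ef k1 x) / (\<i> * of_real k1) ^ 3
      = axis_transform f d k1 (Q y)" for y
    unfolding h_def axis_transform_eq[OF f k1] ..
  have h0_bound: "\<bar>h 0 x y\<bar> \<le> B / \<bar>x\<bar>" if "1 \<le> \<bar>x\<bar>" for x y
    using B(2)[OF that] by (simp add: h_def)
  have hy_bound: "\<bar>hy x y\<bar> \<le> B / (1 + x\<^sup>2 + y\<^sup>2)" for x y
    using B(4)[of x y] by (simp add: hy_def plane)
  note bounds = B(1) h0_bound B(3)[folded h_def] hy_bound B(5)[folded h_def]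
  interpret double_integral_by_parts h hy 3 k1 k2 B
    by (rule double_integral_by_parts.intro[OF k1 k2 h_deriv hy_deriv h_cont hy_cont bounds])
  note by_parts = integrable_transform_ef tendsto_iterated_integral_by_parts
  show "(\<lambda>t. axis_transform f d k1 (Q t) * ef k2 t) integrable_on UNIV"
    using by_parts(1) unfolding transform .
  show "((\<lambda>(r, s). integral {-r..r} (\<lambda>t. integral {-s..s} (\<lambda>x. of_real (f (along d x (Q t))) * ef k1 x * ef k2 t)))
      \<longlongrightarrow> integral UNIV (\<lambda>t. axis_transform f d k1 (Q t) * ef k2 t)) (at_top \<times>\<^sub>F at_top)"
    using by_parts(2) unfolding transform unfolding h_def replicate_0 pdw.simps(1) .
qed

definition iterated_transform ::
  "(real \<times> real \<times> real \<Rightarrow> real) \<Rightarrow> var3 \<Rightarrow> real \<Rightarrow> real \<Rightarrow> (real \<Rightarrow> real \<times> real) \<Rightarrow> complex" where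
  "iterated_transform f d k1 k2 Q = Lim (at_top \<times>\<^sub>F at_top) (\<lambda>(r, s). integral {-r..r} (\<lambda>t.
      integral {-s..s} (\<lambda>x. of_real (f (along d x (Q t))) * ef k1 x * ef k2 t)))"

lemma iterated_transform_Fubini:
  assumes f: "normal3 f" and k1: "k1 \<noteq> 0" and k2: "k2 \<noteq> 0"
    and Q: "\<And>c. continuous_on UNIV (Q c)" and R: "\<And>c. continuous_on UNIV (R c)"
    and plane: "\<And>c s t. along d s (Q c t) = along d' t (R c s)"
  shows "((\<lambda>(r, s). integral {-r..r} (\<lambda>t. integral {-s..s} (\<lambda>x. of_real (f (along d x (Q c t))) * ef k1 x * ef k2 t)))
      \<longlongrightarrow> iterated_transform f d k1 k2 (Q c)) (at_top \<times>\<^sub>F at_top)"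
    and "((\<lambda>t. axis_transform f d k1 (Q c t) * ef k2 t) has_integral iterated_transform f d k1 k2 (Q c)) UNIV"
    and "((\<lambda>s. axis_transform f d' k2 (R c s) * ef k1 s) has_integral iterated_transform f d k1 k2 (Q c)) UNIV"
proof -
  note direct = iterated_transform_by_parts[OF f k1 k2 Q[of c] R[of c] plane]
  note swapped = iterated_transform_by_parts[OF f k2 k1 R[of c] Q[of c] plane[symmetric]]
  have eq: "iterated_transform f d k1 k2 (Q c) = integral UNIV (\<lambda>t. axis_transform f d k1 (Q c t) * ef k2 t)"
    unfolding iterated_transform_def by (rule tendsto_Lim[OF _ direct(2)]) (simp add: prod_filter_eq_bot)
  show "((\<lambda>(r, s). integral {-r..r} (\<lambda>t. integral {-s..s} (\<lambda>x. of_real (f (along d x (Q c t))) * ef k1 x * ef k2 t)))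
      \<longlongrightarrow> iterated_transform f d k1 k2 (Q c)) (at_top \<times>\<^sub>F at_top)"
    unfolding eq by (rule direct(2))
  show "((\<lambda>t. axis_transform f d k1 (Q c t) * ef k2 t) has_integral iterated_transform f d k1 k2 (Q c)) UNIV"
    unfolding eq using direct(1) by (rule integrable_integral)
  have "((\<lambda>(r, s). integral {-r..r} (\<lambda>t. integral {-s..s} (\<lambda>x. of_real (f (along d x (Q c t))) * ef k1 x * ef k2 t)))
      \<longlongrightarrow> integral UNIV (\<lambda>s. axis_transform f d' k2 (R c s) * ef k1 s)) (at_top \<times>\<^sub>F at_top)"
  proof (rule tendsto_iterated_integral_swap)
    show "continuous_on UNIV (\<lambda>(x, t). of_real (f (along d x (Q c t))) * ef k1 x * ef k2 t)"
      unfolding split_def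
      by (intro continuous_intros continuous_on_compose2[OF continuous_on_pdw[of f "[]"], simplified]
          smooth3_if_normal3 f continuous_on_compose2[OF Q[of c]]) auto
    show "((\<lambda>(r, s). integral {-r..r} (\<lambda>x. integral {-s..s} (\<lambda>t. of_real (f (along d x (Q c t))) * ef k1 x * ef k2 t)))
        \<longlongrightarrow> integral UNIV (\<lambda>s. axis_transform f d' k2 (R c s) * ef k1 s)) (at_top \<times>\<^sub>F at_top)"
      using swapped(2) unfolding plane by (simp only: mult_ac)
  qed
  then have "iterated_transform f d k1 k2 (Q c) = integral UNIV (\<lambda>s. axis_transform f d' k2 (R c s) * ef k1 s)"
    unfolding iterated_transform_def by (rule tendsto_Lim[rotated]) (simp add: prod_filter_eq_bot)
  with swapped(1) show "((\<lambda>s. axis_transform f d' k2 (R c s) * ef k1 s) has_integral iterated_transform f d k1 k2 (Q c)) UNIV"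
    by (simp add: integrable_integral)
qed

lemma norm_integral_UNIV_le_of_cubic_decay:
  fixes g :: "real \<Rightarrow> complex"
  assumes g: "g integrable_on UNIV" and c: "1 < \<bar>c\<bar>" and C: "0 \<le> C"
    and decay: "\<And>t. norm (g t) \<le> C / norm (t, c) ^ 3"
  shows "norm (integral UNIV g) \<le> C * pi / c\<^sup>2"
proof -
  have "norm (g t) \<le> C / \<bar>c\<bar> / (t\<^sup>2 + \<bar>c\<bar>\<^sup>2)" for t
  proof -
    have "(norm (t, c))\<^sup>2 = t\<^sup>2 + \<bar>c\<bar>\<^sup>2"
      by (simp add: norm_Pair)
    then have "norm (t, c) ^ 3 = norm (t, c) * (t\<^sup>2 + \<bar>c\<bar>\<^sup>2)"
      by (metis power2_eq_square power3_eq_cube mult.assoc)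
    moreover have "\<bar>c\<bar> * (t\<^sup>2 + \<bar>c\<bar>\<^sup>2) \<le> norm (t, c) * (t\<^sup>2 + \<bar>c\<bar>\<^sup>2)"
      using norm_snd_le[of c t] by (intro mult_right_mono) auto
    ultimately have le: "\<bar>c\<bar> * (t\<^sup>2 + \<bar>c\<bar>\<^sup>2) \<le> norm (t, c) ^ 3"
      by simp
    have pos: "0 < \<bar>c\<bar> * (t\<^sup>2 + \<bar>c\<bar>\<^sup>2)"
      using c by (intro mult_pos_pos add_nonneg_pos) auto
    have "C / norm (t, c) ^ 3 \<le> C / (\<bar>c\<bar> * (t\<^sup>2 + \<bar>c\<bar>\<^sup>2))"
      by (rule divide_left_mono[OF le C mult_pos_pos[OF less_le_trans[OF pos le] pos]])
    with decay[of t] show ?thesis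
      by (simp add: divide_divide_eq_left)
  qed
  then have "norm (integral UNIV g) \<le> C / \<bar>c\<bar> * pi / \<bar>c\<bar>"
    using c C by (intro norm_integral_UNIV_le_pi_div g) auto
  then show ?thesis
    by (simp add: power2_eq_square)
qed

lemma iterated_transform_decay:
  assumes f: "normal3 f" and k1: "k1 \<noteq> 0" and k2: "k2 \<noteq> 0"
    and Q: "\<And>c. continuous_on UNIV (Q c)" and R: "\<And>c. continuous_on UNIV (R c)"
    and plane: "\<And>c s t. along d s (Q c t) = along d' t (R c s)"
    and norm_Q: "\<And>c t. norm (Q c t) = norm (t, c)"
  shows "\<exists>C. \<forall>c. 1 < \<bar>c\<bar> \<longrightarrow> norm (iterated_transform f d k1 k2 (Q c)) \<le> C / c\<^sup>2"
proof -
  obtain C where C: "\<And>q. 1 < norm q \<Longrightarrow> norm (axis_transform f d k1 q) \<le> C / norm q ^ 3"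
    using axis_transform_decay[OF f k1] by blast
  have "norm (iterated_transform f d k1 k2 (Q c)) \<le> max C 0 * pi / c\<^sup>2" if c: "1 < \<bar>c\<bar>" for c
  proof -
    have hi: "((\<lambda>t. axis_transform f d k1 (Q c t) * ef k2 t) has_integral iterated_transform f d k1 k2 (Q c)) UNIV"
      by (rule iterated_transform_Fubini(2)[OF f k1 k2 Q R plane])
    have "norm (axis_transform f d k1 (Q c t) * ef k2 t) \<le> max C 0 / norm (t, c) ^ 3" for t
    proof -
      have "1 < norm (Q c t)"
        using c norm_Q[of c t] norm_snd_le[of c t] by simp
      then have "norm (axis_transform f d k1 (Q c t)) \<le> C / norm (t, c) ^ 3"
        using C[of "Q c t"] by (simp add: norm_Q)
      also have "\<dots> \<le> max C 0 / norm (t, c) ^ 3"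
        by (intro divide_right_mono) auto
      finally show ?thesis
        by (simp add: norm_mult)
    qed
    with hi c have "norm (integral UNIV (\<lambda>t. axis_transform f d k1 (Q c t) * ef k2 t)) \<le> max C 0 * pi / c\<^sup>2"
      by (intro norm_integral_UNIV_le_of_cubic_decay) auto
    then show ?thesis
      using integral_unique[OF hi] by simp
  qed
  then show ?thesis
    by blast
qed

lemma FA_FB_FC_eq_axis_transform:
  "FA f k y z = axis_transform f VX k (y, z)"
  "FB f x k z = axis_transform f VY k (x, z)"
  "FC f x y k = axis_transform f VZ k (x, y)"
  by (simp_all add: FA_def FB_def FC_def axis_transform_def)

lemma FF_FG_FH_eq_iterated_transform:
  "FF f k1 k2 z = iterated_transform f VX k1 k2 (\<lambda>y. (y, z))"
  "FG f k1 y k3 = iterated_transform f VX k1 k3 (\<lambda>z. (y, z))"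
  "FH f x k2 k3 = iterated_transform f VY k2 k3 (\<lambda>z. (x, z))"
  by (simp_all add: FF_def FG_def FH_def iterated_transform_def)

theorem lemma16:
  fixes f :: "real \<times> real \<times> real \<Rightarrow> real"
  assumes "normal3 f"
  shows
   \<comment> \<open>(a) existence of the one-variable transforms\<close>
   "(\<forall>k1 y z. k1 \<noteq> 0 \<longrightarrow>
      ((\<lambda>r. integral {-r..r} (\<lambda>x. complex_of_real (f (x, y, z)) * ef k1 x)) \<longlongrightarrow> FA f k1 y z) at_top) \<and>
    (\<forall>x k2 z. k2 \<noteq> 0 \<longrightarrow>
      ((\<lambda>r. integral {-r..r} (\<lambda>y. complex_of_real (f (x, y, z)) * ef k2 y)) \<longlongrightarrow> FB f x k2 z) at_top) \<and>
    (\<forall>x y k3. k3 \<noteq> 0 \<longrightarrow>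
      ((\<lambda>r. integral {-r..r} (\<lambda>z. complex_of_real (f (x, y, z)) * ef k3 z)) \<longlongrightarrow> FC f x y k3) at_top) \<and>
   \<comment> \<open>(a) moderate decrease 3\<close>
    (\<forall>k1. k1 \<noteq> 0 \<longrightarrow> (\<exists>C. \<forall>y z. norm (y, z) > 1 \<longrightarrow> cmod (FA f k1 y z) \<le> C / norm (y, z) ^ 3)) \<and>
    (\<forall>k2. k2 \<noteq> 0 \<longrightarrow> (\<exists>C. \<forall>x z. norm (x, z) > 1 \<longrightarrow> cmod (FB f x k2 z) \<le> C / norm (x, z) ^ 3)) \<and>
    (\<forall>k3. k3 \<noteq> 0 \<longrightarrow> (\<exists>C. \<forall>x y. norm (x, y) > 1 \<longrightarrow> cmod (FC f x y k3) \<le> C / norm (x, y) ^ 3)) \<and>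
   \<comment> \<open>(b) existence of the two-variable transforms\<close>
    (\<forall>k1 k2 z. k1 \<noteq> 0 \<and> k2 \<noteq> 0 \<longrightarrow>
      ((\<lambda>(r, s). integral {-r..r} (\<lambda>y. integral {-s..s}
          (\<lambda>x. complex_of_real (f (x, y, z)) * ef k1 x * ef k2 y))) \<longlongrightarrow> FF f k1 k2 z)
        (at_top \<times>\<^sub>F at_top)) \<and>
    (\<forall>k1 y k3. k1 \<noteq> 0 \<and> k3 \<noteq> 0 \<longrightarrow>
      ((\<lambda>(r, s). integral {-r..r} (\<lambda>z. integral {-s..s}
          (\<lambda>x. complex_of_real (f (x, y, z)) * ef k1 x * ef k3 z))) \<longlongrightarrow> FG f k1 y k3)
        (at_top \<times>\<^sub>F at_top)) \<and>
    (\<forall>x k2 k3. k2 \<noteq> 0 \<and> k3 \<noteq> 0 \<longrightarrow>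
      ((\<lambda>(r, s). integral {-r..r} (\<lambda>z. integral {-s..s}
          (\<lambda>y. complex_of_real (f (x, y, z)) * ef k2 y * ef k3 z))) \<longlongrightarrow> FH f x k2 k3)
        (at_top \<times>\<^sub>F at_top)) \<and>
   \<comment> \<open>(b) moderate decrease\<close>
    (\<forall>k1 k2. k1 \<noteq> 0 \<and> k2 \<noteq> 0 \<longrightarrow> (\<exists>C. \<forall>z. \<bar>z\<bar> > 1 \<longrightarrow> cmod (FF f k1 k2 z) \<le> C / z\<^sup>2)) \<and>
    (\<forall>k1 k3. k1 \<noteq> 0 \<and> k3 \<noteq> 0 \<longrightarrow> (\<exists>C. \<forall>y. \<bar>y\<bar> > 1 \<longrightarrow> cmod (FG f k1 y k3) \<le> C / y\<^sup>2)) \<and>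
    (\<forall>k2 k3. k2 \<noteq> 0 \<and> k3 \<noteq> 0 \<longrightarrow> (\<exists>C. \<forall>x. \<bar>x\<bar> > 1 \<longrightarrow> cmod (FH f x k2 k3) \<le> C / x\<^sup>2)) \<and>
   \<comment> \<open>(c) iterated transforms\<close>
    (\<forall>k1 k2 z. k1 \<noteq> 0 \<and> k2 \<noteq> 0 \<longrightarrow>
      ((\<lambda>y. FA f k1 y z * ef k2 y) has_integral FF f k1 k2 z) UNIV \<and>
      ((\<lambda>x. FB f x k2 z * ef k1 x) has_integral FF f k1 k2 z) UNIV) \<and>
    (\<forall>k1 y k3. k1 \<noteq> 0 \<and> k3 \<noteq> 0 \<longrightarrow>
      ((\<lambda>z. FA f k1 y z * ef k3 z) has_integral FG f k1 y k3) UNIV \<and>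
      ((\<lambda>x. FC f x y k3 * ef k1 x) has_integral FG f k1 y k3) UNIV) \<and>
    (\<forall>x k2 k3. k2 \<noteq> 0 \<and> k3 \<noteq> 0 \<longrightarrow>
      ((\<lambda>z. FB f x k2 z * ef k3 z) has_integral FH f x k2 k3) UNIV \<and>
      ((\<lambda>y. FC f x y k3 * ef k2 y) has_integral FH f x k2 k3) UNIV)"
proof -
  have cont: "continuous_on UNIV (\<lambda>t::real. (t, c))" "continuous_on UNIV (\<lambda>t::real. (c, t))" for c :: real
    by (intro continuous_intros)+
  have norm_swap: "norm (c, t) = norm (t, c)" for c t :: real
    by (simp add: norm_Pair add.commute)
  have axis:
    "((\<lambda>r. integral {-r..r} (\<lambda>t. of_real (f (t, u, v)) * ef k t)) \<longlongrightarrow> axis_transform f VX k (u, v)) at_top"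
    "((\<lambda>r. integral {-r..r} (\<lambda>t. of_real (f (u, t, v)) * ef k t)) \<longlongrightarrow> axis_transform f VY k (u, v)) at_top"
    "((\<lambda>r. integral {-r..r} (\<lambda>t. of_real (f (u, v, t)) * ef k t)) \<longlongrightarrow> axis_transform f VZ k (u, v)) at_top"
    if "k \<noteq> 0" for k u v
    using tendsto_axis_transform[OF assms that, of VX "(u, v)"] tendsto_axis_transform[OF assms that, of VY "(u, v)"]
      tendsto_axis_transform[OF assms that, of VZ "(u, v)"]
    by simp_all
  note F = iterated_transform_Fubini[where d = VX and d' = VY and Q = "\<lambda>c t. (t, c)" and R = "\<lambda>c s. (s, c)",
      OF assms _ _ cont(1) cont(1), simplified]
    iterated_transform_decay[where d = VX and d' = VY and Q = "\<lambda>c t. (t, c)" and R = "\<lambda>c s. (s, c)",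
      OF assms _ _ cont(1) cont(1), simplified]
  note G = iterated_transform_Fubini[where d = VX and d' = VZ and Q = "\<lambda>c t. (c, t)" and R = "\<lambda>c s. (s, c)",
      OF assms _ _ cont(2) cont(1), simplified]
    iterated_transform_decay[where d = VX and d' = VZ and Q = "\<lambda>c t. (c, t)" and R = "\<lambda>c s. (s, c)",
      OF assms _ _ cont(2) cont(1), simplified]
  note H = iterated_transform_Fubini[where d = VY and d' = VZ and Q = "\<lambda>c t. (c, t)" and R = "\<lambda>c s. (c, s)",
      OF assms _ _ cont(2) cont(2), simplified]
    iterated_transform_decay[where d = VY and d' = VZ and Q = "\<lambda>c t. (c, t)" and R = "\<lambda>c s. (c, s)",
      OF assms _ _ cont(2) cont(2), simplified]
  show ?thesis
    unfolding FA_FB_FC_eq_axis_transform FF_FG_FH_eq_iterated_transform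
    using axis axis_transform_decay[OF assms] F G H by (auto simp: norm_swap)
qed

end
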